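(* Let $\mathcal L:\mathbb F^{q\times q}\to\mathbb F^{n\times n}$ be a $*$-linear map with Choi matrix $\mathbb L$ and matricization $L=[L_{ij}]$, and set $m=\operatorname{rank}\mathbb L$. Then: (a) for any matrices $L_1,\ldots,L_m\in\mathbb F^{n\times q}$ with $\operatorname{span}\{L_1,\ldots,L_m\}=\operatorname{span}\{L_{ij}: 1\le i\le n,\ 1\le j\le q\}$, the matrices $A_1,\ldots,A_m$ and $\mathbb H=\mathbb H(\mathcal L;L_1,\ldots,L_m)$ produced by the construction below give a minimal Hill representation $\mathcal L(V)=\sum_{k,l=1}^m \mathbb H_{kl}A_lVA_k^*$ of $\mathcal L$ (for any admissible choice of the scalars $\beta^k_{ij}$); (b) every minimal Hill representation of $\mathcal L$ is obtained in this way from some such $L_1,\ldots,L_m$; (c) the matrices $A_1,\ldots,A_m$ of any minimal Hill representation of $\mathcal L$ satisfy $\operatorname{span}\{A_1,\ldots,A_m\}=\operatorname{span}\{L_{ij}: 1\le i\le n,\ 1\le j\le q\}$; (d) conversely, any $A_1,\ldots,A_m\in\mathbb F^{n\times q}$ satisfying the span identity in (c) appear as the matrices of some minimal Hill representation of $\mathcal L$.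
   Context: $\mathbb F\in\{\mathbb R,\mathbb C\}$. For $T\in\mathbb F^{r\times s}$, $\operatorname{vec}_{r\times s}(T)\in\mathbb F^{rs}$ is the column-stacking vectorization (its $((j-1)r+i)$-th entry is $T_{ij}$). $\mathcal E^{(q)}_{ij}$ denotes the standard basis matrix of $\mathbb F^{q\times q}$ with $1$ in position $(i,j)$. For a linear map $\mathcal L:\mathbb F^{q\times q}\to\mathbb F^{n\times n}$: its matricization is the matrix $L\in\mathbb F^{n^2\times q^2}$ with $L\operatorname{vec}_{q\times q}(V)=\operatorname{vec}_{n\times n}(\mathcal L(V))$ for all $V$, written in block form $L=[L_{ij}]$, $1\le i\le n$, $1\le j\le q$, with blocks $L_{ij}\in\mathbb F^{n\times q}$; its Choi matrix is $\mathbb L=[\mathcal L(\mathcal E^{(q)}_{ij})]_{i,j=1}^q\in\mathbb F^{nq\times nq}$. $\mathcal L$ is $*$-linear if $\mathcal L(V^* )=\mathcal L(V)^*$ for all $V$. A Hill representation of $\mathcal L$ is an identity $\mathcal L(V)=\sum_{k,l=1}^m\mathbb H_{kl}A_lVA_k^*$ for all $V\in\mathbb F^{q\times q}$, with $A_1,\ldots,A_m\in\mathbb F^{n\times q}$ and $\mathbb H=[\mathbb H_{kl}]\in\mathbb F^{m\times m}$ (the Hill matrix); it is minimal if $m$ is the smallest possible among all Hill representations of $\mathcal L$. Construction: given $L_1,\ldots,L_m\in\mathbb F^{n\times q}$ whose span equals $\operatorname{span}\{L_{ij}\}$ (where $m=\operatorname{rank}\mathbb L=\dim\operatorname{span}\{L_{ij}\}$,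 so the $L_k$ are linearly independent), let $\alpha^{ij}_k$ be the unique scalars with $L_{ij}=\sum_{k=1}^m\alpha^{ij}_kL_k$ and let $\beta^k_{ij}$ be any scalars with $L_k=\sum_{i=1}^n\sum_{j=1}^q\beta^k_{ij}L_{ij}$. Set $A_k\in\mathbb F^{n\times q}$ with $(i,j)$ entry $\overline{\alpha^{ij}_k}$, $B_k\in\mathbb F^{n\times q}$ with $(i,j)$ entry $\beta^k_{ij}$, and $\mathbb H(\mathcal L;L_1,\ldots,L_m)=[\vec{\mathbf 1}_n^*(B_k\circ\overline{L_l})\vec{\mathbf 1}_q]_{k,l=1}^m=[\operatorname{trace}(B_kL_l^* )]_{k,l=1}^m$, where $\circ$ is the Hadamard (entrywise) product and $\vec{\mathbf 1}_p$ the all-ones vector in $\mathbb F^p$. *)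

theory Defs
  imports "Jordan_Normal_Form.Matrix" "Jordan_Normal_Form.Schur_Decomposition"
    "Jordan_Normal_Form.DL_Rank"
begin

text \<open>All indices are 0-based.  Matrices are Jordan_Normal_Form matrices over a
  field with an involution (conjugatable_field: covers real with trivial
  conjugation and complex with cnj).\<close>

definition std_mat :: "nat \<Rightarrow> nat \<Rightarrow> nat \<Rightarrow> 'a::zero_neq_one mat" where
  "std_mat p i j = mat p p (\<lambda>(a,b). if a = i \<and> b = j then 1 else 0)"

definition vec_cs :: "'a mat \<Rightarrow> 'a vec" where
  "vec_cs T = vec (dim_row T * dim_col T) (\<lambda>k. T $$ (k mod dim_row T, k div dim_row T))"

definition lin_map :: "nat \<Rightarrow> nat \<Rightarrow> ('a::field mat \<Rightarrow> 'a mat) \<Rightarrow> bool" where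
  "lin_map n q \<L> \<longleftrightarrow>
     (\<forall>V \<in> carrier_mat q q. \<L> V \<in> carrier_mat n n) \<and>
     (\<forall>V \<in> carrier_mat q q. \<forall>W \<in> carrier_mat q q. \<L> (V + W) = \<L> V + \<L> W) \<and>
     (\<forall>c. \<forall>V \<in> carrier_mat q q. \<L> (c \<cdot>\<^sub>m V) = c \<cdot>\<^sub>m \<L> V)"

definition star_linear :: "nat \<Rightarrow> ('a::conjugatable_field mat \<Rightarrow> 'a mat) \<Rightarrow> bool" where
  "star_linear q \<L> \<longleftrightarrow> (\<forall>V \<in> carrier_mat q q. \<L> (mat_adjoint V) = mat_adjoint (\<L> V))"

definition matricization :: "nat \<Rightarrow> nat \<Rightarrow> ('a::field mat \<Rightarrow> 'a mat) \<Rightarrow> 'a mat" where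
  "matricization n q \<L> = (THE L. L \<in> carrier_mat (n*n) (q*q) \<and>
      (\<forall>V \<in> carrier_mat q q. L *\<^sub>v vec_cs V = vec_cs (\<L> V)))"

definition mat_block :: "nat \<Rightarrow> nat \<Rightarrow> ('a::field mat \<Rightarrow> 'a mat) \<Rightarrow> nat \<Rightarrow> nat \<Rightarrow> 'a mat" where
  "mat_block n q \<L> i j = mat n q (\<lambda>(a,c). matricization n q \<L> $$ (i*n + a, j*q + c))"

definition blocks :: "nat \<Rightarrow> nat \<Rightarrow> ('a::field mat \<Rightarrow> 'a mat) \<Rightarrow> 'a mat set" where
  "blocks n q \<L> = {mat_block n q \<L> i j | i j. i < n \<and> j < q}"

text \<open>Choi matrix [L(E_ij)]_{i,j<q}, of size qn x qn (block (i,j) is n x n).\<close>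
definition choi :: "nat \<Rightarrow> nat \<Rightarrow> ('a::field mat \<Rightarrow> 'a mat) \<Rightarrow> 'a mat" where
  "choi n q \<L> = mat (q*n) (q*n)
     (\<lambda>(r,s). \<L> (std_mat q (r div n) (s div n)) $$ (r mod n, s mod n))"

definition mspan :: "nat \<Rightarrow> nat \<Rightarrow> 'a::field mat set \<Rightarrow> 'a mat set" where
  "mspan nr nc S = LinearCombinations.module.span class_ring (module_mat TYPE('a) nr nc) S"

definition hill_rep :: "nat \<Rightarrow> nat \<Rightarrow> ('a::conjugatable_field mat \<Rightarrow> 'a mat)
    \<Rightarrow> nat \<Rightarrow> (nat \<Rightarrow> 'a mat) \<Rightarrow> 'a mat \<Rightarrow> bool" where
  "hill_rep n q \<L> m A H \<longleftrightarrow>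
     (\<forall>k < m. A k \<in> carrier_mat n q) \<and> H \<in> carrier_mat m m \<and>
     (\<forall>V \<in> carrier_mat q q. \<L> V = mat n n (\<lambda>(a,b).
        \<Sum>k<m. \<Sum>l<m. H $$ (k,l) * (A l * V * mat_adjoint (A k)) $$ (a,b)))"

definition minimal_hill_rep :: "nat \<Rightarrow> nat \<Rightarrow> ('a::conjugatable_field mat \<Rightarrow> 'a mat)
    \<Rightarrow> nat \<Rightarrow> (nat \<Rightarrow> 'a mat) \<Rightarrow> 'a mat \<Rightarrow> bool" where
  "minimal_hill_rep n q \<L> m A H \<longleftrightarrow> hill_rep n q \<L> m A H \<and>
     (\<forall>m' A' H'. hill_rep n q \<L> m' A' H' \<longrightarrow> m \<le> m')"

text \<open>Admissible data for the construction: L_1..L_m (n x q) spanning span{L_ij},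
  alpha^{ij}_k (written alpha i j k) with L_ij = sum_k alpha^{ij}_k L_k, and
  beta^k_{ij} (written beta k i j) with L_k = sum_{i,j} beta^k_{ij} L_ij.\<close>
definition constr_data :: "nat \<Rightarrow> nat \<Rightarrow> ('a::field mat \<Rightarrow> 'a mat) \<Rightarrow> nat
    \<Rightarrow> (nat \<Rightarrow> 'a mat) \<Rightarrow> (nat \<Rightarrow> nat \<Rightarrow> nat \<Rightarrow> 'a) \<Rightarrow> (nat \<Rightarrow> nat \<Rightarrow> nat \<Rightarrow> 'a) \<Rightarrow> bool" where
  "constr_data n q \<L> m Lf \<alpha> \<beta> \<longleftrightarrow>
     (\<forall>k < m. Lf k \<in> carrier_mat n q) \<and>
     mspan n q (Lf ` {..<m}) = mspan n q (blocks n q \<L>) \<and>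
     (\<forall>i < n. \<forall>j < q. \<forall>a < n. \<forall>b < q.
        mat_block n q \<L> i j $$ (a,b) = (\<Sum>k<m. \<alpha> i j k * Lf k $$ (a,b))) \<and>
     (\<forall>k < m. \<forall>a < n. \<forall>b < q.
        Lf k $$ (a,b) = (\<Sum>i<n. \<Sum>j<q. \<beta> k i j * mat_block n q \<L> i j $$ (a,b)))"

definition constr_A :: "nat \<Rightarrow> nat \<Rightarrow> (nat \<Rightarrow> nat \<Rightarrow> nat \<Rightarrow> 'a::conjugatable_field) \<Rightarrow> nat \<Rightarrow> 'a mat" where
  "constr_A n q \<alpha> k = mat n q (\<lambda>(i,j). conjugate (\<alpha> i j k))"

definition constr_B :: "nat \<Rightarrow> nat \<Rightarrow> (nat \<Rightarrow> nat \<Rightarrow> nat \<Rightarrow> 'a::field) \<Rightarrow> nat \<Rightarrow> 'a mat" where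
  "constr_B n q \<beta> k = mat n q (\<lambda>(i,j). \<beta> k i j)"

text \<open>H(L; L_1..L_m) = [1_n^* (B_k o conj(L_l)) 1_q]_{k,l} (entrywise sum of the Hadamard product).\<close>
definition constr_H :: "nat \<Rightarrow> nat \<Rightarrow> nat \<Rightarrow> (nat \<Rightarrow> 'a::conjugatable_field mat)
    \<Rightarrow> (nat \<Rightarrow> nat \<Rightarrow> nat \<Rightarrow> 'a) \<Rightarrow> 'a mat" where
  "constr_H n q m Lf \<beta> = mat m m (\<lambda>(k,l). \<Sum>i<n. \<Sum>j<q. constr_B n q \<beta> k $$ (i,j) * conjugate (Lf l $$ (i,j)))"

end

theory Submission
  imports Defs
begin

(* Write L_ij for the blocks of the matricization, so that L_ij(a,b) = L(E_bj)(a,i), and m for the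
   dimension of their span; the columns of the Choi matrix are the vectorized blocks, so m is its
   rank. Evaluated at the standard basis matrices, a Hill representation says exactly
   L_ij = sum_k conj(A_k(i,j)) G_k with G_k = sum_l H_kl A_l. Hence it has at least m terms, and
   with m terms both the A_k and the G_k are bases of the block span.
   *-linearity makes the array L_ij(a,b) Hermitian under (i,j) <-> (a,b). For a basis A of the
   block span this expresses the coefficients of L_ij in the basis A through the conjugated A_k,
   which is a Hill matrix. For a minimal representation it forces H to be Hermitian; taking
   L_k = G_k, the coefficients of L_ij are conj(A_k(i,j)), and any beta with L_k = sum beta L_ij
   is biorthogonal to them, which identifies H with H(L; L_1, ..., L_m). *)

section \<open>Index arithmetic and matrix entries\<close>

lemma sum_lessThan_mult:
  fixes p q :: nat
  shows "(\<Sum>s<p*q. f s) = (\<Sum>j<p. \<Sum>b<q. f (j*q + b))"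
proof -
  have "(\<Sum>s<p*q. f s) = (\<Sum>j<p. sum f {j*q..<j*q + q})" by (rule sum.nat_group[symmetric])
  also have "\<dots> = (\<Sum>j<p. \<Sum>b<q. f (j*q + b))"
  proof (rule sum.cong[OF refl])
    fix j
    have "sum f {j*q..<j*q + q} = sum f {0 + j*q..<q + j*q}" by (simp add: add.commute)
    also have "\<dots> = (\<Sum>b = 0..<q. f (b + j*q))" by (rule sum.shift_bounds_nat_ivl)
    finally show "sum f {j*q..<j*q + q} = (\<Sum>b<q. f (j*q + b))"
      by (simp add: atLeast0LessThan add.commute)
  qed
  finally show ?thesis .
qed

lemma mod_div_less_mult: "(r::nat) < n*m \<Longrightarrow> r mod n < n \<and> r div n < m"
  by (cases "n = 0") (auto simp: less_mult_imp_div_less mult.commute)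

lemma mult_add_less_mult: "(i::nat) < r \<Longrightarrow> j < c \<Longrightarrow> j*r + i < r*c"
proof -
  assume "i < r" "j < c"
  hence "j*r + i < (j + 1)*r" by simp
  also have "\<dots> \<le> c*r" using \<open>j < c\<close> by (intro mult_le_mono1) simp
  finally show ?thesis by (simp add: mult.commute)
qed

lemma conjugate_one[simp]: "conjugate (1::'a::conjugatable_field) = 1"
proof -
  have "conjugate (1::'a) * conjugate 1 = conjugate 1" by (metis conjugate_dist_mul mult_1)
  moreover have "conjugate (1::'a) \<noteq> 0" by simp
  ultimately show ?thesis by (metis mult_cancel_left1)
qed

lemma std_mat_carrier[simp]: "std_mat p i j \<in> carrier_mat p p"
  by (simp add: std_mat_def)

lemma dim_std_mat[simp]: "dim_row (std_mat p i j) = p" "dim_col (std_mat p i j) = p"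
  by (simp_all add: std_mat_def)

lemma index_std_mat[simp]:
  "a < p \<Longrightarrow> b < p \<Longrightarrow> std_mat p i j $$ (a,b) = (if a = i \<and> b = j then 1 else 0)"
  by (simp add: std_mat_def)

lemma mat_adjoint_carrier[simp]: "A \<in> carrier_mat r c \<Longrightarrow> mat_adjoint A \<in> carrier_mat c r"
  by (auto simp: mat_adjoint_def)

lemma index_mat_adjoint:
  "A \<in> carrier_mat r c \<Longrightarrow> i < c \<Longrightarrow> j < r \<Longrightarrow> mat_adjoint A $$ (i,j) = conjugate (A $$ (j,i))"
  by (auto simp: mat_adjoint_def mat_of_rows_index vec_index_conjugate)

lemma index_mult_mat_sum:
  assumes "A \<in> carrier_mat r k" "B \<in> carrier_mat k c" "i < r" "j < c"
  shows "(A * B) $$ (i,j) = (\<Sum>t<k. A $$ (i,t) * B $$ (t,j))"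
  using assms by (auto simp: scalar_prod_def atLeast0LessThan intro: sum.cong)

lemma index_mult_mat_adjoint:
  assumes A: "A \<in> carrier_mat n q" and B: "B \<in> carrier_mat n q" and V: "V \<in> carrier_mat q q"
    and x: "x < n" and y: "y < n"
  shows "(A * V * mat_adjoint B) $$ (x,y) =
    (\<Sum>b<q. \<Sum>j<q. A $$ (x,b) * V $$ (b,j) * conjugate (B $$ (y,j)))"
proof -
  have "(A * V * mat_adjoint B) $$ (x,y) = (\<Sum>j<q. (A * V) $$ (x,j) * mat_adjoint B $$ (j,y))"
    using assms by (intro index_mult_mat_sum[of _ n q _ n]) auto
  also have "\<dots> = (\<Sum>j<q. (\<Sum>b<q. A $$ (x,b) * V $$ (b,j)) * conjugate (B $$ (y,j)))"
  proof (rule sum.cong[OF refl])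
    fix j assume "j \<in> {..<q}"
    then show "(A * V) $$ (x,j) * mat_adjoint B $$ (j,y) =
        (\<Sum>b<q. A $$ (x,b) * V $$ (b,j)) * conjugate (B $$ (y,j))"
      using index_mult_mat_sum[OF A V x, of j] index_mat_adjoint[OF B, of j y] y by simp
  qed
  also have "\<dots> = (\<Sum>b<q. \<Sum>j<q. A $$ (x,b) * V $$ (b,j) * conjugate (B $$ (y,j)))"
    by (simp add: sum_distrib_right) (rule sum.swap)
  finally show ?thesis .
qed


section \<open>Spans, dimension and independent families of matrices\<close>

context vectorspace
begin

lemma lin_indpt_card_le_card:
  assumes "finite A" "finite B" "B \<subseteq> carrier V" "lin_indpt A" "A \<subseteq> span B"
  shows "card A \<le> card B"
  using replacement[OF assms] by force

lemma span_eq_if_card_le: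
  assumes "finite A" "finite B" "B \<subseteq> carrier V" "lin_indpt A" "A \<subseteq> span B" "card B \<le> card A"
  shows "span A = span B"
proof -
  obtain C where C: "finite C" "int (card C) \<le> int (card B) - int (card A)" "span (A \<union> C) = span B"
    using replacement[OF assms(1-5)] by blast
  have "card C = 0" using C(2) assms(6) by linarith
  with C show ?thesis by simp
qed

lemma exists_basis_subset:
  assumes fin: "finite X" and X: "X \<subseteq> carrier V"
  obtains U where "U \<subseteq> X" "lin_indpt U" "span U = span X" "card U = vectorspace.dim K (span_vs X)"
proof -
  have "lin_indpt {}" unfolding lin_dep_def by auto
  then obtain U where U: "maximal U (\<lambda>T. T \<subseteq> X \<and> lin_indpt T)"
    using maximal_exists_superset[of X "\<lambda>T. T \<subseteq> X \<and> lin_indpt T" "{}"] fin by blast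
  have UX: "U \<subseteq> X" and Ui: "lin_indpt U" using U by (auto simp: maximal_def)
  have Uc: "U \<subseteq> carrier V" using UX X by auto
  have "X \<subseteq> span U"
  proof
    fix x assume x: "x \<in> X"
    show "x \<in> span U"
    proof (rule ccontr)
      assume "x \<notin> span U"
      moreover have "x \<notin> U" using \<open>x \<notin> span U\<close> in_own_span[OF Uc] by auto
      ultimately have "lin_indpt (U \<union> {x})" using lin_dep_iff_in_span[OF Uc Ui] x X by auto
      then have "U \<union> {x} = U" using U UX x unfolding maximal_def by blast
      with \<open>x \<notin> U\<close> show False by auto
    qed
  qed
  then have "span U = span X"
    using span_is_monotone[OF UX] span_is_subset[OF _ span_is_submodule[OF Uc]] by blast
  with that UX Ui dim_span[OF X fin U] show ?thesis by simp
qed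

end

context matrix_vs
begin

lemma index_finsum_mat:
  assumes "finite A" "f \<in> A \<rightarrow> carrier_mat nr nc" "i < nr" "j < nc"
  shows "finsum V f A $$ (i,j) = (\<Sum>x\<in>A. f x $$ (i,j))"
  using assms(1,2)
proof (induction A rule: finite_induct)
  case empty
  then show ?case using assms(3,4) by simp
next
  case (insert a F)
  then have "finsum V f (insert a F) = f a + finsum V f F" and c: "finsum V f F \<in> carrier_mat nr nc"
    by (auto intro: finsum_insert finsum_closed)
  moreover have "(f a + finsum V f F) $$ (i,j) = f a $$ (i,j) + finsum V f F $$ (i,j)"
    using c assms(3,4) by (intro index_add_mat(1)) (auto simp: carrier_matD[OF c])
  ultimately show ?case using insert by simp
qed

lemma index_lincomb_mat:
  assumes "finite A" "A \<subseteq> carrier_mat nr nc" "i < nr" "j < nc"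
  shows "lincomb a A $$ (i,j) = (\<Sum>x\<in>A. a x * x $$ (i,j))"
proof -
  have "lincomb a A $$ (i,j) = (\<Sum>x\<in>A. (a x \<cdot>\<^sub>m x) $$ (i,j))"
    unfolding lincomb_def using assms by (intro index_finsum_mat) auto
  also have "\<dots> = (\<Sum>x\<in>A. a x * x $$ (i,j))" using assms by (intro sum.cong) auto
  finally show ?thesis .
qed

lemma mem_span_imageD:
  assumes I: "finite I" and g: "g ` I \<subseteq> carrier_mat nr nc" and Y: "Y \<in> span (g ` I)"
  shows "Y \<in> carrier_mat nr nc \<and> (\<exists>c. \<forall>a<nr. \<forall>b<nc. Y $$ (a,b) = (\<Sum>i\<in>I. c i * g i $$ (a,b)))"
proof -
  have fin: "finite (g ` I)" using I by simp
  obtain a where a: "lincomb a (g ` I) = Y" using finite_in_span[OF fin g Y] by auto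
  \<comment> \<open>\<open>g\<close> need not be injective: give each element of \<open>g ` I\<close> its coefficient at one chosen index\<close>
  define J where "J = inv_into I g ` g ` I"
  have JI: "J \<subseteq> I" unfolding J_def by (auto intro: inv_into_into)
  have gJ: "g ` J = g ` I"
  proof
    show "g ` J \<subseteq> g ` I" using JI by auto
    show "g ` I \<subseteq> g ` J"
    proof
      fix x assume x: "x \<in> g ` I"
      then have "g (inv_into I g x) = x" by (rule f_inv_into_f)
      moreover have "inv_into I g x \<in> J" using x unfolding J_def by auto
      ultimately show "x \<in> g ` J" by (metis imageI)
    qed
  qed
  have inj: "inj_on g J" unfolding J_def by (rule inj_onI) (auto simp: f_inv_into_f)
  define c where "c i = (if i \<in> J then a (g i) else 0)" for i
  have "Y $$ (u,v) = (\<Sum>i\<in>I. c i * g i $$ (u,v))" if "u < nr" "v < nc" for u v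
  proof -
    have "Y $$ (u,v) = lincomb a (g ` I) $$ (u,v)" using a by simp
    also have "\<dots> = (\<Sum>x\<in>g ` J. a x * x $$ (u,v))"
      using index_lincomb_mat[OF fin g that] gJ by simp
    also have "\<dots> = (\<Sum>i\<in>J. a (g i) * g i $$ (u,v))" by (simp add: sum.reindex[OF inj])
    also have "\<dots> = (\<Sum>i\<in>I. c i * g i $$ (u,v))"
      by (rule sum.mono_neutral_cong_right[symmetric]) (use I JI in \<open>auto simp: c_def\<close>)
    finally show ?thesis .
  qed
  moreover have "Y \<in> carrier_mat nr nc" using a g by auto
  ultimately show ?thesis by blast
qed

lemma mem_span_imageI:
  assumes I: "finite I" and g: "g ` I \<subseteq> carrier_mat nr nc" and Y: "Y \<in> carrier_mat nr nc"
    and c: "\<forall>a<nr. \<forall>b<nc. Y $$ (a,b) = (\<Sum>i\<in>I. c i * g i $$ (a,b))"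
  shows "Y \<in> span (g ` I)"
proof -
  have fin: "finite (g ` I)" using I by simp
  define a where "a x = (\<Sum>i\<in>{i\<in>I. g i = x}. c i)" for x
  have "lincomb a (g ` I) = Y"
  proof (rule eq_matI)
    fix u v assume "u < dim_row Y" "v < dim_col Y"
    hence uv: "u < nr" "v < nc" using Y by auto
    have "lincomb a (g ` I) $$ (u,v) = (\<Sum>x\<in>g ` I. a x * x $$ (u,v))"
      by (rule index_lincomb_mat[OF fin g uv])
    also have "\<dots> = (\<Sum>x\<in>g ` I. \<Sum>i\<in>{i\<in>I. g i = x}. c i * g i $$ (u,v))"
      by (rule sum.cong[OF refl]) (auto simp: a_def sum_distrib_right)
    also have "\<dots> = (\<Sum>i\<in>I. c i * g i $$ (u,v))" by (rule sum.image_gen[symmetric, OF I])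
    also have "\<dots> = Y $$ (u,v)" using c uv by simp
    finally show "lincomb a (g ` I) $$ (u,v) = Y $$ (u,v)" .
  next
    have "lincomb a (g ` I) \<in> carrier_mat nr nc" using lincomb_closed g by auto
    with Y show "dim_row (lincomb a (g ` I)) = dim_row Y" "dim_col (lincomb a (g ` I)) = dim_col Y"
      by (auto dest: carrier_matD)
  qed
  then show ?thesis unfolding span_def using fin by blast
qed

lemma mem_span_image_iff:
  assumes "finite I" "g ` I \<subseteq> carrier_mat nr nc"
  shows "Y \<in> span (g ` I) \<longleftrightarrow>
    Y \<in> carrier_mat nr nc \<and> (\<exists>c. \<forall>a<nr. \<forall>b<nc. Y $$ (a,b) = (\<Sum>i\<in>I. c i * g i $$ (a,b)))"
  using mem_span_imageD[OF assms] mem_span_imageI[OF assms] by blast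

end

definition mdim :: "nat \<Rightarrow> nat \<Rightarrow> 'a::field mat set \<Rightarrow> nat" where
  "mdim nr nc S = vectorspace.dim class_ring ((module_mat TYPE('a) nr nc)\<lparr>carrier := mspan nr nc S\<rparr>)"

text \<open>Independence of an indexed family: unlike \<open>lin_indpt\<close> of its image set, a repeated
  member counts as a dependence.\<close>
definition mat_lin_indep :: "nat \<Rightarrow> nat \<Rightarrow> (nat \<Rightarrow> 'a::field mat) \<Rightarrow> nat set \<Rightarrow> bool" where
  "mat_lin_indep nr nc g I \<longleftrightarrow>
     (\<forall>c. (\<forall>a<nr. \<forall>b<nc. (\<Sum>i\<in>I. c i * g i $$ (a,b)) = 0) \<longrightarrow> (\<forall>i\<in>I. c i = 0))"

lemma mat_lin_indepD:
  assumes "mat_lin_indep nr nc g I" "\<And>a b. a < nr \<Longrightarrow> b < nc \<Longrightarrow> (\<Sum>i\<in>I. c i * g i $$ (a,b)) = 0"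
    and "i \<in> I"
  shows "c i = 0"
  using assms unfolding mat_lin_indep_def by blast

lemma (in matrix_vs) mat_lin_indep_imp_lin_indpt:
  assumes I: "finite I" and g: "g ` I \<subseteq> carrier_mat nr nc" and md: "mat_lin_indep nr nc g I"
  shows "inj_on g I \<and> lin_indpt (g ` I)"
proof -
  have fin: "finite (g ` I)" using I by simp
  have inj: "inj_on g I"
  proof (rule inj_onI, rule ccontr)
    fix i j assume ij: "i \<in> I" "j \<in> I" "g i = g j" "i \<noteq> j"
    define c where "c k = (if k = i then 1 else if k = j then -1 else (0::'a))" for k
    have "(\<Sum>k\<in>I. c k * g k $$ (u,v)) = 0" if "u < nr" "v < nc" for u v
    proof -
      have "(\<Sum>k\<in>I. c k * g k $$ (u,v)) =
          (\<Sum>k\<in>I. (if k = i then g k $$ (u,v) else 0) - (if k = j then g k $$ (u,v) else 0))"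
        using ij by (intro sum.cong) (auto simp: c_def)
      then show ?thesis using ij I by (simp add: sum_subtractf)
    qed
    from mat_lin_indepD[OF md this ij(1)] have "c i = 0" .
    thus False by (simp add: c_def)
  qed
  have "lin_indpt (g ` I)"
  proof
    assume "lin_dep (g ` I)"
    then obtain a v where av: "lincomb a (g ` I) = 0\<^sub>m nr nc" "v \<in> g ` I" "a v \<noteq> 0"
      using finite_lin_dep[OF fin _ g] by blast
    have "(\<Sum>i\<in>I. a (g i) * g i $$ (u,w)) = 0" if "u < nr" "w < nc" for u w
      using av(1) index_lincomb_mat[OF fin g that, of a] that by (simp add: sum.reindex[OF inj])
    then have "\<forall>i\<in>I. a (g i) = 0" using mat_lin_indepD[OF md, where c="\<lambda>i. a (g i)"] by blast
    thus False using av(2,3) by auto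
  qed
  with inj show ?thesis by blast
qed

lemma (in matrix_vs) mat_lin_indep_if_lin_indpt:
  assumes I: "finite I" and g: "g ` I \<subseteq> carrier_mat nr nc" and h: "inj_on g I \<and> lin_indpt (g ` I)"
  shows "mat_lin_indep nr nc g I"
  unfolding mat_lin_indep_def
proof (intro allI impI ballI)
  have fin: "finite (g ` I)" using I by simp
  show "c i = 0" if c0: "\<forall>a<nr. \<forall>b<nc. (\<Sum>i\<in>I. c i * g i $$ (a,b)) = 0" and i: "i \<in> I" for c i
  proof -
    define a where "a x = c (inv_into I g x)" for x
    have "lincomb a (g ` I) = 0\<^sub>m nr nc"
    proof (rule eq_matI)
      fix u v assume "u < dim_row (0\<^sub>m nr nc :: 'a mat)" "v < dim_col (0\<^sub>m nr nc :: 'a mat)"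
      hence uv: "u < nr" "v < nc" by auto
      show "lincomb a (g ` I) $$ (u,v) = 0\<^sub>m nr nc $$ (u,v)"
        using index_lincomb_mat[OF fin g uv] c0 uv h by (simp add: sum.reindex a_def)
    next
      have "lincomb a (g ` I) \<in> carrier_mat nr nc" using lincomb_closed g by auto
      then show "dim_row (lincomb a (g ` I)) = dim_row (0\<^sub>m nr nc :: 'a mat)"
          "dim_col (lincomb a (g ` I)) = dim_col (0\<^sub>m nr nc :: 'a mat)"
        by (auto dest: carrier_matD)
    qed
    then have "a (g i) = 0" using h i fin lin_dep_crit[of "g ` I" "g ` I" a "g i"] by auto
    thus "c i = 0" using h i by (simp add: a_def)
  qed
qed

lemma mem_mspan_image_iff:
  fixes g :: "nat \<Rightarrow> 'a::field mat"
  assumes "finite I" "g ` I \<subseteq> carrier_mat nr nc"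
  shows "Y \<in> mspan nr nc (g ` I) \<longleftrightarrow>
    Y \<in> carrier_mat nr nc \<and> (\<exists>c. \<forall>a<nr. \<forall>b<nc. Y $$ (a,b) = (\<Sum>i\<in>I. c i * g i $$ (a,b)))"
proof -
  interpret M: matrix_vs nr nc "TYPE('a)" .
  show ?thesis unfolding mspan_def by (rule M.mem_span_image_iff[OF assms])
qed

lemma subset_mspan:
  fixes X :: "'a::field mat set"
  assumes "X \<subseteq> carrier_mat nr nc"
  shows "X \<subseteq> mspan nr nc X"
proof -
  interpret M: matrix_vs nr nc "TYPE('a)" .
  show ?thesis using assms unfolding mspan_def by (rule M.in_own_span)
qed

lemma mspan_subset_mspan:
  fixes X Y :: "'a::field mat set"
  assumes "Y \<subseteq> carrier_mat nr nc" "X \<subseteq> mspan nr nc Y"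
  shows "mspan nr nc X \<subseteq> mspan nr nc Y"
proof -
  interpret M: matrix_vs nr nc "TYPE('a)" .
  show ?thesis using assms unfolding mspan_def by (intro M.span_is_subset M.span_is_submodule)
qed

lemma mdim_le_card:
  fixes g :: "nat \<Rightarrow> 'a::field mat"
  assumes S: "finite S" "S \<subseteq> carrier_mat nr nc" and I: "finite I" and g: "g ` I \<subseteq> carrier_mat nr nc"
    and sub: "S \<subseteq> mspan nr nc (g ` I)"
  shows "mdim nr nc S \<le> card I"
proof -
  interpret M: matrix_vs nr nc "TYPE('a)" .
  obtain U where U: "U \<subseteq> S" "M.lin_indpt U" "M.span U = M.span S"
      "card U = vectorspace.dim class_ring (M.span_vs S)"
    by (rule M.exists_basis_subset[OF S])
  moreover from U have "card U \<le> card (g ` I)"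
    using S I g sub by (intro M.lin_indpt_card_le_card) (auto simp: mspan_def intro: finite_subset)
  ultimately show ?thesis using card_image_le[OF I, of g] by (simp add: mdim_def mspan_def)
qed

lemma exists_family_spanning:
  fixes S :: "'a::field mat set"
  assumes S: "finite S" "S \<subseteq> carrier_mat nr nc"
  obtains g where "\<forall>k<mdim nr nc S. g k \<in> carrier_mat nr nc" "mspan nr nc (g ` {..<mdim nr nc S}) = mspan nr nc S"
proof -
  interpret M: matrix_vs nr nc "TYPE('a)" .
  obtain U where U: "U \<subseteq> S" "M.lin_indpt U" "M.span U = M.span S"
      "card U = vectorspace.dim class_ring (M.span_vs S)"
    by (rule M.exists_basis_subset[OF S])
  then have "card U = mdim nr nc S" by (simp add: mdim_def mspan_def)
  moreover have "finite U" using U(1) S(1) by (rule finite_subset)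
  ultimately obtain h where "bij_betw h {..<mdim nr nc S} U"
    using ex_bij_betw_nat_finite[of U] by (auto simp: atLeast0LessThan)
  then have "h ` {..<mdim nr nc S} = U" by (simp add: bij_betw_def)
  with U(1,3) S that show ?thesis unfolding mspan_def by blast
qed

lemma spanning_family_of_mdim:
  fixes g :: "nat \<Rightarrow> 'a::field mat"
  assumes S: "finite S" "S \<subseteq> carrier_mat nr nc"
    and g: "\<forall>k<mdim nr nc S. g k \<in> carrier_mat nr nc"
    and sub: "S \<subseteq> mspan nr nc (g ` {..<mdim nr nc S})"
  shows "mspan nr nc (g ` {..<mdim nr nc S}) = mspan nr nc S \<and> mat_lin_indep nr nc g {..<mdim nr nc S}"
proof -
  interpret M: matrix_vs nr nc "TYPE('a)" .
  define D where "D = mdim nr nc S"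
  define G where "G = g ` {..<D}"
  have Gc: "G \<subseteq> carrier_mat nr nc" and fG: "finite G" using g by (auto simp: G_def D_def)
  obtain U where U: "U \<subseteq> S" "M.lin_indpt U" "M.span U = M.span S"
      "card U = vectorspace.dim class_ring (M.span_vs S)"
    by (rule M.exists_basis_subset[OF S])
  have cU: "card U = D" using U(4) by (simp add: D_def mdim_def mspan_def)
  obtain U' where U': "U' \<subseteq> G" "M.lin_indpt U'" "M.span U' = M.span G"
      "card U' = vectorspace.dim class_ring (M.span_vs G)"
    by (rule M.exists_basis_subset[OF fG Gc])
  have fU: "finite U" "finite U'" using U(1) U'(1) S(1) fG by (auto intro: finite_subset)
  have UG: "U \<subseteq> M.span G" using U(1) sub by (auto simp: G_def D_def mspan_def)
  have "card U \<le> card U'" using U'(1,3) Gc UG fU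
    by (intro M.lin_indpt_card_le_card[OF _ _ _ U(2)]) auto
  moreover have "card U' \<le> card G" by (rule card_mono[OF fG U'(1)])
  moreover have "card G \<le> D" unfolding G_def using card_image_le[of "{..<D}" g] by simp
  ultimately have cG: "card G = D" and "U' = G"
    using cU card_subset_eq[OF fG U'(1)] by auto
  then have "M.lin_indpt G" using U'(2) by simp
  moreover have "inj_on g {..<D}" using cG unfolding G_def by (simp add: eq_card_imp_inj_on)
  ultimately have "mat_lin_indep nr nc g {..<D}" using M.mat_lin_indep_if_lin_indpt Gc by (simp add: G_def)
  moreover have "M.span U = M.span G"
    using M.span_eq_if_card_le[OF fU(1) fG Gc U(2) UG] cG cU by simp
  ultimately show ?thesis using U(3) unfolding G_def D_def mspan_def by simp
qed

lemma mdim_image_lin_indep: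
  fixes g :: "nat \<Rightarrow> 'a::field mat"
  assumes g: "\<forall>k<d. g k \<in> carrier_mat nr nc" and indep: "mat_lin_indep nr nc g {..<d}"
  shows "mdim nr nc (g ` {..<d}) = d"
proof -
  interpret M: matrix_vs nr nc "TYPE('a)" .
  have gc: "g ` {..<d} \<subseteq> carrier_mat nr nc" using g by auto
  then have "inj_on g {..<d}" "M.lin_indpt (g ` {..<d})" using M.mat_lin_indep_imp_lin_indpt indep by auto
  moreover have "maximal (g ` {..<d}) (\<lambda>T. T \<subseteq> g ` {..<d} \<and> M.lin_indpt T)"
    using calculation by (auto simp: maximal_def)
  ultimately show ?thesis
    using M.dim_span[OF gc] unfolding mdim_def mspan_def by (simp add: card_image)
qed

lemma map_mat_conjugate_mem_mspan:
  fixes g :: "nat \<Rightarrow> 'a::conjugatable_field mat"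
  assumes I: "finite I" and g: "g ` I \<subseteq> carrier_mat nr nc" and Y: "Y \<in> mspan nr nc (g ` I)"
  shows "map_mat conjugate Y \<in> mspan nr nc ((\<lambda>i. map_mat conjugate (g i)) ` I)"
proof -
  obtain c where Yc: "Y \<in> carrier_mat nr nc" and c: "\<forall>a<nr. \<forall>b<nc. Y $$ (a,b) = (\<Sum>i\<in>I. c i * g i $$ (a,b))"
    using Y mem_mspan_image_iff[OF I g] by blast
  have "\<forall>a<nr. \<forall>b<nc. map_mat conjugate Y $$ (a,b) =
      (\<Sum>i\<in>I. conjugate (c i) * map_mat conjugate (g i) $$ (a,b))"
    using Yc c g I by (auto simp: sum_conjugate conjugate_dist_mul intro!: sum.cong)
  with Yc g show ?thesis by (subst mem_mspan_image_iff[OF I]) auto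
qed

lemma mat_lin_indep_conjugate:
  fixes g :: "nat \<Rightarrow> 'a::conjugatable_field mat"
  assumes I: "finite I" and g: "g ` I \<subseteq> carrier_mat nr nc" and indep: "mat_lin_indep nr nc g I"
  shows "mat_lin_indep nr nc (\<lambda>i. map_mat conjugate (g i)) I"
  unfolding mat_lin_indep_def
proof (intro allI impI)
  fix c assume c: "\<forall>a<nr. \<forall>b<nc. (\<Sum>i\<in>I. c i * map_mat conjugate (g i) $$ (a,b)) = 0"
  have "\<forall>a<nr. \<forall>b<nc. (\<Sum>i\<in>I. conjugate (c i) * g i $$ (a,b)) = 0"
  proof (intro allI impI)
    fix a b assume ab: "a < nr" "b < nc"
    have "(\<Sum>i\<in>I. conjugate (c i) * g i $$ (a,b)) =
        conjugate (\<Sum>i\<in>I. c i * map_mat conjugate (g i) $$ (a,b))"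
      using g ab I by (auto simp: sum_conjugate conjugate_dist_mul intro!: sum.cong)
    with c ab show "(\<Sum>i\<in>I. conjugate (c i) * g i $$ (a,b)) = 0" by simp
  qed
  then have "\<forall>i\<in>I. conjugate (c i) = 0" using mat_lin_indepD[OF indep, where c="\<lambda>i. conjugate (c i)"] by blast
  then show "\<forall>i\<in>I. c i = 0" by simp
qed

lemma mspan_conjugate_eq:
  fixes g h :: "nat \<Rightarrow> 'a::conjugatable_field mat"
  assumes "finite I" "finite J" "g ` I \<subseteq> carrier_mat nr nc" "h ` J \<subseteq> carrier_mat nr nc"
    and eq: "mspan nr nc (g ` I) = mspan nr nc (h ` J)"
  shows "mspan nr nc ((\<lambda>i. map_mat conjugate (g i)) ` I) = mspan nr nc ((\<lambda>j. map_mat conjugate (h j)) ` J)"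
proof -
  have sub: "mspan nr nc ((\<lambda>i. map_mat conjugate (g' i)) ` I') \<subseteq> mspan nr nc ((\<lambda>j. map_mat conjugate (h' j)) ` J')"
    if "finite I'" "finite J'" "g' ` I' \<subseteq> carrier_mat nr nc" "h' ` J' \<subseteq> carrier_mat nr nc"
      "g' ` I' \<subseteq> mspan nr nc (h' ` J')" for I' J' and g' h' :: "nat \<Rightarrow> 'a mat"
    using that map_mat_conjugate_mem_mspan[of J' h'] by (intro mspan_subset_mspan) auto
  show ?thesis
    using assms subset_mspan[of "g ` I" nr nc] subset_mspan[of "h ` J" nr nc]
    by (intro equalityI sub) auto
qed


section \<open>Vectorization, matricization and the Choi matrix\<close>

lemma vec_cs_carrier[simp]: "V \<in> carrier_mat r c \<Longrightarrow> vec_cs V \<in> carrier_vec (r*c)"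
  by (auto simp: vec_cs_def)

lemma index_vec_cs:
  "V \<in> carrier_mat r c \<Longrightarrow> t < r*c \<Longrightarrow> vec_cs V $ t = V $$ (t mod r, t div r)"
  by (auto simp: vec_cs_def)

lemma vec_cs_inj:
  assumes "V \<in> carrier_mat r c" "W \<in> carrier_mat r c" "vec_cs V = vec_cs W"
  shows "V = W"
proof (rule eq_matI)
  fix i j assume ij: "i < dim_row W" "j < dim_col W"
  hence "j*r + i < r*c" using assms(2) by (simp add: mult_add_less_mult)
  moreover have "(j*r + i) mod r = i" "(j*r + i) div r = j" using ij assms(2) by auto
  ultimately show "V $$ (i,j) = W $$ (i,j)" using assms by (metis index_vec_cs)
qed (use assms in auto)

lemma inj_on_vec_cs: "X \<subseteq> carrier_mat r c \<Longrightarrow> inj_on vec_cs X"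
  using vec_cs_inj by (metis inj_onI subsetD)

lemma vec_cs_std_mat:
  assumes "s < q*q"
  shows "vec_cs (std_mat q (s mod q) (s div q) :: 'a::field mat) = unit_vec (q*q) s"
proof (rule eq_vecI)
  fix t assume "t < dim_vec (unit_vec (q*q) s :: 'a vec)"
  hence t: "t < q*q" by simp
  have "(t mod q = s mod q \<and> t div q = s div q) = (t = s)" by (metis div_mult_mod_eq)
  then show "vec_cs (std_mat q (s mod q) (s div q) :: 'a mat) $ t = unit_vec (q*q) s $ t"
    using t assms mod_div_less_mult[OF t] by (simp add: index_vec_cs[of _ q q] unit_vec_def)
qed (simp add: vec_cs_def)

lemma lin_map_zero:
  assumes "lin_map n q \<L>"
  shows "\<L> (0\<^sub>m q q) = 0\<^sub>m n n"
proof -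
  have car: "\<L> (0\<^sub>m q q) \<in> carrier_mat n n" using assms by (simp add: lin_map_def)
  have "\<L> (0\<^sub>m q q) = \<L> (0 \<cdot>\<^sub>m 0\<^sub>m q q)" by simp
  also have "\<dots> = 0 \<cdot>\<^sub>m \<L> (0\<^sub>m q q)" using assms zero_carrier_mat unfolding lin_map_def by blast
  also have "\<dots> = 0\<^sub>m n n" using car by (intro eq_matI) auto
  finally show ?thesis .
qed

lemma lin_map_expand:
  assumes lin: "lin_map n q \<L>" and V: "V \<in> carrier_mat q q" and x: "x < n" and y: "y < n"
  shows "\<L> V $$ (x,y) = (\<Sum>b<q. \<Sum>j<q. V $$ (b,j) * \<L> (std_mat q b j) $$ (x,y))"
proof -
  define part where "part S = mat q q (\<lambda>(b,j). if (b,j) \<in> S then V $$ (b,j) else 0)" for S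
  have part_insert: "part (insert (b,j) S) = part S + V $$ (b,j) \<cdot>\<^sub>m std_mat q b j"
    if "(b,j) \<notin> S" for b j S
    using that by (intro eq_matI) (auto simp: part_def)
  have "\<L> (part S) $$ (x,y) = (\<Sum>(b,j)\<in>S. V $$ (b,j) * \<L> (std_mat q b j) $$ (x,y))"
    if "finite S" for S
    using that
  proof (induction S rule: finite_induct)
    case empty
    have "part {} = 0\<^sub>m q q" by (intro eq_matI) (auto simp: part_def)
    then show ?case using x y by (simp add: lin_map_zero[OF lin])
  next
    case (insert p S)
    obtain b j where p: "p = (b,j)" by force
    have "part S \<in> carrier_mat q q" by (simp add: part_def)
    moreover have "part (insert p S) = part S + V $$ (b,j) \<cdot>\<^sub>m std_mat q b j"
      using insert.hyps by (simp add: p part_insert)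
    ultimately have "\<L> (part (insert p S)) = \<L> (part S) + V $$ (b,j) \<cdot>\<^sub>m \<L> (std_mat q b j)"
      using lin by (simp add: lin_map_def)
    moreover have "\<L> (part S) \<in> carrier_mat n n" "\<L> (std_mat q b j) \<in> carrier_mat n n"
      using lin by (auto simp: lin_map_def part_def)
    ultimately show ?case using insert.IH insert.hyps x y by (simp add: p)
  qed
  from this[of "{..<q} \<times> {..<q}"]
  have "\<L> (part ({..<q} \<times> {..<q})) $$ (x,y) = (\<Sum>b<q. \<Sum>j<q. V $$ (b,j) * \<L> (std_mat q b j) $$ (x,y))"
    by (simp add: sum.cartesian_product)
  moreover have "part ({..<q} \<times> {..<q}) = V" using V by (intro eq_matI) (auto simp: part_def)
  ultimately show ?thesis by simp
qed

lemma matricization_eq: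
  assumes lin: "lin_map n q \<L>"
  shows "matricization n q \<L> =
    mat (n*n) (q*q) (\<lambda>(r,s). \<L> (std_mat q (s mod q) (s div q)) $$ (r mod n, r div n))"
    (is "_ = ?K")
  unfolding matricization_def
proof (rule the1_equality)
  have car: "\<L> X \<in> carrier_mat n n" if "X \<in> carrier_mat q q" for X
    using lin that by (simp add: lin_map_def)
  have "?K *\<^sub>v vec_cs V = vec_cs (\<L> V)" if V: "V \<in> carrier_mat q q" for V
  proof (rule eq_vecI)
    fix r assume "r < dim_vec (vec_cs (\<L> V))"
    hence r: "r < n*n" using car[OF V] by (simp add: vec_cs_def)
    have "(?K *\<^sub>v vec_cs V) $ r =
        (\<Sum>s<q*q. V $$ (s mod q, s div q) * \<L> (std_mat q (s mod q) (s div q)) $$ (r mod n, r div n))"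
      using r V by (auto simp: scalar_prod_def atLeast0LessThan vec_cs_def ac_simps intro: sum.cong)
    also have "\<dots> = (\<Sum>j<q. \<Sum>b<q. V $$ (b,j) * \<L> (std_mat q b j) $$ (r mod n, r div n))"
      by (simp add: sum_lessThan_mult)
    also have "\<dots> = (\<Sum>b<q. \<Sum>j<q. V $$ (b,j) * \<L> (std_mat q b j) $$ (r mod n, r div n))"
      by (rule sum.swap)
    also have "\<dots> = \<L> V $$ (r mod n, r div n)"
      using lin_map_expand[OF lin V] mod_div_less_mult[OF r] by simp
    also have "\<dots> = vec_cs (\<L> V) $ r" using car[OF V] r by (simp add: index_vec_cs)
    finally show "(?K *\<^sub>v vec_cs V) $ r = vec_cs (\<L> V) $ r" .
  qed (use car[OF V] in \<open>simp add: vec_cs_def\<close>)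
  then show K: "?K \<in> carrier_mat (n*n) (q*q) \<and> (\<forall>V \<in> carrier_mat q q. ?K *\<^sub>v vec_cs V = vec_cs (\<L> V))"
    by simp
  show "\<exists>!L. L \<in> carrier_mat (n*n) (q*q) \<and> (\<forall>V \<in> carrier_mat q q. L *\<^sub>v vec_cs V = vec_cs (\<L> V))"
  proof (rule ex1I, fact K)
    fix L assume L: "L \<in> carrier_mat (n*n) (q*q) \<and> (\<forall>V \<in> carrier_mat q q. L *\<^sub>v vec_cs V = vec_cs (\<L> V))"
    \<comment> \<open>the columns of a matrix are its products with the vectorized standard basis\<close>
    have "L $$ (r,s) = ?K $$ (r,s)" if r: "r < n*n" and s: "s < q*q" for r s
    proof -
      let ?E = "std_mat q (s mod q) (s div q) :: 'a mat"
      have "L $$ (r,s) = (L *\<^sub>v unit_vec (q*q) s) $ r" using L r s by auto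
      also have "\<dots> = vec_cs (\<L> ?E) $ r" using L by (simp add: vec_cs_std_mat[OF s, symmetric])
      also have "\<dots> = ?K $$ (r,s)" using car[of ?E] r s by (simp add: index_vec_cs)
      finally show ?thesis .
    qed
    with L show "L = ?K" by (intro eq_matI) auto
  qed
qed

lemma mat_block_carrier[simp]: "mat_block n q \<L> i j \<in> carrier_mat n q"
  by (simp add: mat_block_def)

lemma dim_mat_block[simp]: "dim_row (mat_block n q \<L> i j) = n" "dim_col (mat_block n q \<L> i j) = q"
  by (simp_all add: mat_block_def)

lemma index_mat_block:
  assumes "lin_map n q \<L>" "i < n" "j < q" "a < n" "b < q"
  shows "mat_block n q \<L> i j $$ (a,b) = \<L> (std_mat q b j) $$ (a,i)"
proof -
  have "i*n + a < n*n" "j*q + b < q*q" using assms by (auto simp: mult_add_less_mult)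
  thus ?thesis using assms by (simp add: mat_block_def matricization_eq)
qed

lemma mat_block_conjugate:
  assumes lin: "lin_map n q \<L>" and star: "star_linear q \<L>"
    and "i < n" "j < q" "a < n" "b < q"
  shows "mat_block n q \<L> a b $$ (i,j) = conjugate (mat_block n q \<L> i j $$ (a,b))"
proof -
  have c: "mat_adjoint (std_mat q b j) \<in> carrier_mat q q" by simp
  have adj: "mat_adjoint (std_mat q b j) = (std_mat q j b :: 'a mat)"
    by (intro eq_matI) (auto simp: index_mat_adjoint[of _ q q] carrier_matD[OF c])
  have "\<L> (std_mat q b j) \<in> carrier_mat n n" using lin by (simp add: lin_map_def)
  moreover have "\<L> (std_mat q j b) = mat_adjoint (\<L> (std_mat q b j))"
    using star adj by (metis star_linear_def std_mat_carrier)
  ultimately show ?thesis using assms by (simp add: index_mat_block index_mat_adjoint)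
qed

lemma blocks_eq_image: "blocks n q \<L> = (\<lambda>s. mat_block n q \<L> (s mod n) (s div n)) ` {..<q*n}"
proof (intro equalityI subsetI)
  fix X assume "X \<in> blocks n q \<L>"
  then obtain i j where ij: "X = mat_block n q \<L> i j" "i < n" "j < q" by (auto simp: blocks_def)
  then have "j*n + i \<in> {..<q*n}" using mult_add_less_mult[OF ij(2,3)] by (simp add: mult.commute)
  moreover have "X = mat_block n q \<L> ((j*n + i) mod n) ((j*n + i) div n)" using ij by simp
  ultimately show "X \<in> (\<lambda>s. mat_block n q \<L> (s mod n) (s div n)) ` {..<q*n}" by blast
next
  fix X assume "X \<in> (\<lambda>s. mat_block n q \<L> (s mod n) (s div n)) ` {..<q*n}"
  then obtain s where s: "s < n*q" "X = mat_block n q \<L> (s mod n) (s div n)" by (auto simp: mult.commute)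
  with mod_div_less_mult[OF s(1)] show "X \<in> blocks n q \<L>" by (auto simp: blocks_def)
qed

lemma finite_blocks[simp]: "finite (blocks n q \<L>)"
  by (simp add: blocks_eq_image)

lemma blocks_carrier[simp]: "blocks n q \<L> \<subseteq> carrier_mat n q"
  by (auto simp: blocks_def)

lemma col_choi:
  assumes lin: "lin_map n q \<L>" and s: "s < q*n"
  shows "col (choi n q \<L>) s = vec_cs (mat_block n q \<L> (s mod n) (s div n))"
proof (rule eq_vecI)
  have sm: "s mod n < n" "s div n < q" using mod_div_less_mult[of s n q] s by (simp_all add: mult.commute)
  fix r assume "r < dim_vec (vec_cs (mat_block n q \<L> (s mod n) (s div n)))"
  hence r: "r < n*q" by (simp add: vec_cs_def)
  have "col (choi n q \<L>) s $ r = \<L> (std_mat q (r div n) (s div n)) $$ (r mod n, s mod n)"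
    using r s by (simp add: choi_def mult.commute)
  also have "\<dots> = mat_block n q \<L> (s mod n) (s div n) $$ (r mod n, r div n)"
    using index_mat_block[OF lin sm mod_div_less_mult[OF r, THEN conjunct1] mod_div_less_mult[OF r, THEN conjunct2]]
    by simp
  also have "\<dots> = vec_cs (mat_block n q \<L> (s mod n) (s div n)) $ r"
    using r by (simp add: index_vec_cs[of _ n q])
  finally show "col (choi n q \<L>) s $ r = vec_cs (mat_block n q \<L> (s mod n) (s div n)) $ r" .
qed (simp add: choi_def vec_cs_def mult.commute)

context
  fixes n q :: nat and field_ty :: "'a::field itself"
begin

interpretation M: matrix_vs n q field_ty .
interpretation W: vec_space field_ty "n*q" .

lemma vec_cs_lincomb:
  assumes X: "finite X" "X \<subseteq> carrier_mat n q"
  shows "W.lincomb a (vec_cs ` X) = vec_cs (M.lincomb (\<lambda>Y. a (vec_cs Y)) X)"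
proof -
  have inj: "inj_on vec_cs X" using X(2) by (rule inj_on_vec_cs)
  have Xv: "vec_cs ` X \<subseteq> carrier_vec (n*q)" using X by auto
  have lc: "M.lincomb (\<lambda>Y. a (vec_cs Y)) X \<in> carrier_mat n q" using X by (intro M.lincomb_closed) auto
  show ?thesis
  proof (rule eq_vecI)
    fix t assume "t < dim_vec (vec_cs (M.lincomb (\<lambda>Y. a (vec_cs Y)) X))"
    hence t: "t < n*q" using lc by (simp add: vec_cs_def)
    have tm: "t mod n < n" "t div n < q" using mod_div_less_mult[OF t] by auto
    have "W.lincomb a (vec_cs ` X) $ t = (\<Sum>w\<in>vec_cs ` X. a w * w $ t)" by (rule W.lincomb_index[OF t Xv])
    also have "\<dots> = (\<Sum>Y\<in>X. a (vec_cs Y) * vec_cs Y $ t)" by (simp add: sum.reindex[OF inj])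
    also have "\<dots> = (\<Sum>Y\<in>X. a (vec_cs Y) * Y $$ (t mod n, t div n))"
      by (rule sum.cong[OF refl]) (use X t in \<open>auto simp: index_vec_cs\<close>)
    also have "\<dots> = M.lincomb (\<lambda>Y. a (vec_cs Y)) X $$ (t mod n, t div n)"
      by (rule M.index_lincomb_mat[OF X tm, symmetric])
    also have "\<dots> = vec_cs (M.lincomb (\<lambda>Y. a (vec_cs Y)) X) $ t" using lc t by (simp add: index_vec_cs)
    finally show "W.lincomb a (vec_cs ` X) $ t = vec_cs (M.lincomb (\<lambda>Y. a (vec_cs Y)) X) $ t" .
  next
    have "W.lincomb a (vec_cs ` X) \<in> carrier_vec (n*q)" using Xv by (intro W.lincomb_closed) auto
    thus "dim_vec (W.lincomb a (vec_cs ` X)) = dim_vec (vec_cs (M.lincomb (\<lambda>Y. a (vec_cs Y)) X))"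
      using lc by (simp add: vec_cs_def)
  qed
qed

lemma lin_indpt_vec_cs:
  assumes U: "finite U" "U \<subseteq> carrier_mat n q" and indpt: "M.lin_indpt U"
  shows "W.lin_indpt (vec_cs ` U)"
proof
  assume dep: "W.lin_dep (vec_cs ` U)"
  have Uv: "vec_cs ` U \<subseteq> carrier_vec (n*q)" using U by auto
  have fUv: "finite (vec_cs ` U)" using U(1) by simp
  obtain a v where av: "W.lincomb a (vec_cs ` U) = 0\<^sub>v (n*q)" "v \<in> vec_cs ` U" "a v \<noteq> 0"
    using W.finite_lin_dep[OF fUv dep Uv] by auto
  have lc: "M.lincomb (\<lambda>Y. a (vec_cs Y)) U \<in> carrier_mat n q" using U by (intro M.lincomb_closed) auto
  have "vec_cs (0\<^sub>m n q :: 'a mat) = 0\<^sub>v (n*q)" by (rule eq_vecI) (auto simp: vec_cs_def mod_div_less_mult)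
  then have z: "M.lincomb (\<lambda>Y. a (vec_cs Y)) U = 0\<^sub>m n q"
    using vec_cs_lincomb[OF U, of a] av(1) vec_cs_inj[OF lc zero_carrier_mat] by simp
  obtain Y0 where Y0: "Y0 \<in> U" "v = vec_cs Y0" using av(2) by auto
  have "M.lin_dep U" using M.lin_dep_crit[of U U "\<lambda>Y. a (vec_cs Y)" Y0] U(1) Y0 av(3) z by auto
  with indpt show False by simp
qed

lemma vec_cs_mem_span:
  assumes U: "finite U" "U \<subseteq> carrier_mat n q" and Y: "Y \<in> M.span U"
  shows "vec_cs Y \<in> W.span (vec_cs ` U)"
proof -
  have inj: "inj_on vec_cs U" using U(2) by (rule inj_on_vec_cs)
  obtain a where a: "M.lincomb a U = Y" using M.finite_in_span[OF U Y] by auto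
  define b where "b w = a (inv_into U vec_cs w)" for w
  have "M.lincomb (\<lambda>Z. b (vec_cs Z)) U = M.lincomb a U"
    by (rule M.lincomb_cong) (use U inj in \<open>auto simp: b_def\<close>)
  then have "vec_cs Y = W.lincomb b (vec_cs ` U)" using vec_cs_lincomb[OF U, of b] a by simp
  then show ?thesis using U(1) by (intro W.in_spanI) auto
qed

lemma set_cols_choi:
  assumes lin: "lin_map n q \<L>"
  shows "set (cols (choi n q \<L>)) = vec_cs ` blocks n q \<L>"
proof -
  have "set (cols (choi n q \<L>)) = col (choi n q \<L>) ` {..<q*n}"
    by (simp add: cols_def choi_def atLeast0LessThan)
  also have "\<dots> = (\<lambda>s. vec_cs (mat_block n q \<L> (s mod n) (s div n))) ` {..<q*n}"
    using col_choi[OF lin] by (intro image_cong) auto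
  also have "\<dots> = vec_cs ` blocks n q \<L>" by (simp add: blocks_eq_image image_image)
  finally show ?thesis .
qed

lemma rank_choi:
  assumes lin: "lin_map n q (\<L> :: 'a mat \<Rightarrow> 'a mat)"
  shows "vec_space.rank (q*n) (choi n q \<L>) = mdim n q (blocks n q \<L>)"
proof -
  let ?B = "blocks n q \<L>"
  obtain U where U: "U \<subseteq> ?B" "M.lin_indpt U" "M.span U = M.span ?B"
      "card U = vectorspace.dim class_ring (M.span_vs ?B)"
    by (rule M.exists_basis_subset[OF finite_blocks blocks_carrier])
  have fU: "finite U" using U(1) by (rule finite_subset) simp
  have Uc: "U \<subseteq> carrier_mat n q" using U(1) blocks_carrier by (rule subset_trans)
  note cols = set_cols_choi[OF lin]
  have indpt: "W.lin_indpt (vec_cs ` U)" by (rule lin_indpt_vec_cs[OF fU Uc U(2)])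
  have "maximal (vec_cs ` U) (\<lambda>T. T \<subseteq> set (cols (choi n q \<L>)) \<and> W.lin_indpt T)"
    unfolding maximal_def
  proof (intro conjI allI impI)
    show "vec_cs ` U \<subseteq> set (cols (choi n q \<L>))" using U(1) cols by auto
    fix T assume T: "vec_cs ` U \<subseteq> T \<and> T \<subseteq> set (cols (choi n q \<L>)) \<and> W.lin_indpt T"
    show "T = vec_cs ` U"
    proof (rule ccontr)
      assume "T \<noteq> vec_cs ` U"
      then obtain t where t: "t \<in> T" "t \<notin> vec_cs ` U" using T by blast
      then obtain Y where Y: "Y \<in> ?B" "t = vec_cs Y" using T cols by blast
      have "Y \<in> M.span ?B" using Y(1) M.in_own_span[OF blocks_carrier] by blast
      then have "Y \<in> M.span U" using U(3) by simp
      then have "t \<in> W.span (vec_cs ` U)" using vec_cs_mem_span[OF fU Uc] Y by simp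
      moreover have "t \<in> carrier_vec (n*q)" using Y blocks_carrier[of n q \<L>] vec_cs_carrier by blast
      moreover have "vec_cs ` U \<subseteq> carrier_vec (n*q)" using Uc by auto
      ultimately have "W.lin_dep (vec_cs ` U \<union> {t})"
        using W.lin_dep_iff_in_span[OF _ indpt _ t(2)] by simp
      moreover have "vec_cs ` U \<union> {t} \<subseteq> T" using T t by auto
      ultimately have "W.lin_dep T" by (rule W.supset_ld_is_ld)
      with T show False by simp
    qed
  qed (rule indpt)
  then have "W.rank (choi n q \<L>) = card (vec_cs ` U)"
    by (intro W.rank_card_indpt[of _ "q*n"]) (simp_all add: choi_def mult.commute)
  also have "\<dots> = card U" using inj_on_vec_cs[OF Uc] by (rule card_image)
  also have "\<dots> = mdim n q ?B" using U(4) by (simp add: mdim_def mspan_def)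
  finally show ?thesis by (simp add: mult.commute)
qed

end


section \<open>Hill representations\<close>

lemma hill_term_std_mat:
  assumes "A \<in> carrier_mat n q" "B \<in> carrier_mat n q" "a < n" "i < n" "b < q" "j < q"
  shows "(A * std_mat q b j * mat_adjoint B) $$ (a,i) = A $$ (a,b) * conjugate (B $$ (i,j))"
proof -
  have "(A * std_mat q b j * mat_adjoint B) $$ (a,i) =
      (\<Sum>b'<q. \<Sum>j'<q. A $$ (a,b') * std_mat q b j $$ (b',j') * conjugate (B $$ (i,j')))"
    using assms by (intro index_mult_mat_adjoint) auto
  also have "\<dots> = (\<Sum>b'<q. \<Sum>j'<q. if b' = b \<and> j' = j then A $$ (a,b) * conjugate (B $$ (i,j)) else 0)"
    using assms by (intro sum.cong refl) auto
  also have "\<dots> = (\<Sum>b'<q. if b' = b then A $$ (a,b) * conjugate (B $$ (i,j)) else 0)"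
    by (intro sum.cong refl, rename_tac b', case_tac "b' = b") (use assms in simp_all)
  also have "\<dots> = A $$ (a,b) * conjugate (B $$ (i,j))"
    using assms by simp
  finally show ?thesis .
qed

lemma hill_sum_expand:
  assumes A: "\<forall>k<m. A k \<in> carrier_mat n q" and V: "V \<in> carrier_mat q q" and x: "x < n" and y: "y < n"
  shows "(\<Sum>k<m. \<Sum>l<m. H $$ (k,l) * (A l * V * mat_adjoint (A k)) $$ (x,y)) =
    (\<Sum>b<q. \<Sum>j<q. V $$ (b,j) * (\<Sum>k<m. \<Sum>l<m. H $$ (k,l) * (conjugate (A k $$ (y,j)) * A l $$ (x,b))))"
proof -
  have "(\<Sum>k<m. \<Sum>l<m. H $$ (k,l) * (A l * V * mat_adjoint (A k)) $$ (x,y)) =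
      (\<Sum>k<m. \<Sum>l<m. \<Sum>b<q. \<Sum>j<q. H $$ (k,l) * (A l $$ (x,b) * V $$ (b,j) * conjugate (A k $$ (y,j))))"
  proof (intro sum.cong refl)
    fix k l assume "k \<in> {..<m}" "l \<in> {..<m}"
    then have "(A l * V * mat_adjoint (A k)) $$ (x,y) =
        (\<Sum>b<q. \<Sum>j<q. A l $$ (x,b) * V $$ (b,j) * conjugate (A k $$ (y,j)))"
      using A V x y by (intro index_mult_mat_adjoint) auto
    then show "H $$ (k,l) * (A l * V * mat_adjoint (A k)) $$ (x,y) =
        (\<Sum>b<q. \<Sum>j<q. H $$ (k,l) * (A l $$ (x,b) * V $$ (b,j) * conjugate (A k $$ (y,j))))"
      by (simp add: sum_distrib_left)
  qed
  also have "\<dots> = (\<Sum>b<q. \<Sum>j<q. \<Sum>k<m. \<Sum>l<m.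
      H $$ (k,l) * (A l $$ (x,b) * V $$ (b,j) * conjugate (A k $$ (y,j))))"
    by (simp only: sum.swap[of _ "{..<m}" "{..<q}"])
  also have "\<dots> = (\<Sum>b<q. \<Sum>j<q. V $$ (b,j) *
      (\<Sum>k<m. \<Sum>l<m. H $$ (k,l) * (conjugate (A k $$ (y,j)) * A l $$ (x,b))))"
    by (simp add: sum_distrib_left ac_simps)
  finally show ?thesis .
qed

lemma hill_rep_iff_blocks:
  assumes lin: "lin_map n q \<L>"
  shows "hill_rep n q \<L> m A H \<longleftrightarrow> (\<forall>k<m. A k \<in> carrier_mat n q) \<and> H \<in> carrier_mat m m \<and>
    (\<forall>i<n. \<forall>j<q. \<forall>a<n. \<forall>b<q. mat_block n q \<L> i j $$ (a,b) =
       (\<Sum>k<m. \<Sum>l<m. H $$ (k,l) * (conjugate (A k $$ (i,j)) * A l $$ (a,b))))"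
    (is "_ \<longleftrightarrow> ?A \<and> ?H \<and> ?blocks")
proof -
  have term_std: "H $$ (k,l) * (A l * std_mat q b j * mat_adjoint (A k)) $$ (a,i) =
      H $$ (k,l) * (conjugate (A k $$ (i,j)) * A l $$ (a,b))"
    if ?A "k < m" "l < m" "i < n" "a < n" "b < q" "j < q" for i j a b k l
    using that hill_term_std_mat[of "A l" n q "A k" a i b j] by simp
  have hill_eq_iff: "(\<forall>V \<in> carrier_mat q q. \<L> V = mat n n (\<lambda>(a,b).
        \<Sum>k<m. \<Sum>l<m. H $$ (k,l) * (A l * V * mat_adjoint (A k)) $$ (a,b))) \<longleftrightarrow> ?blocks"
    if A: ?A
  proof
    assume eq: "\<forall>V \<in> carrier_mat q q. \<L> V = mat n n (\<lambda>(a,b).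
        \<Sum>k<m. \<Sum>l<m. H $$ (k,l) * (A l * V * mat_adjoint (A k)) $$ (a,b))"
    show ?blocks
    proof (intro allI impI)
      fix i j a b assume ij: "i < n" "j < q" "a < n" "b < q"
      have "mat_block n q \<L> i j $$ (a,b) =
          (\<Sum>k<m. \<Sum>l<m. H $$ (k,l) * (A l * std_mat q b j * mat_adjoint (A k)) $$ (a,i))"
        using eq ij lin by (simp add: index_mat_block)
      then show "mat_block n q \<L> i j $$ (a,b) =
          (\<Sum>k<m. \<Sum>l<m. H $$ (k,l) * (conjugate (A k $$ (i,j)) * A l $$ (a,b)))"
        using term_std[OF A] ij by simp
    qed
  next
    assume blocks: ?blocks
    show "\<forall>V \<in> carrier_mat q q. \<L> V = mat n n (\<lambda>(a,b).
        \<Sum>k<m. \<Sum>l<m. H $$ (k,l) * (A l * V * mat_adjoint (A k)) $$ (a,b))"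
    proof (intro ballI eq_matI)
      fix V x y assume V: "V \<in> carrier_mat q q" and "x < dim_row (mat n n (\<lambda>(a,b).
        \<Sum>k<m. \<Sum>l<m. H $$ (k,l) * (A l * V * mat_adjoint (A k)) $$ (a,b)))"
        "y < dim_col (mat n n (\<lambda>(a,b).
        \<Sum>k<m. \<Sum>l<m. H $$ (k,l) * (A l * V * mat_adjoint (A k)) $$ (a,b)))"
      hence x: "x < n" and y: "y < n" by auto
      have "\<L> V $$ (x,y) = (\<Sum>b<q. \<Sum>j<q. V $$ (b,j) * mat_block n q \<L> y j $$ (x,b))"
        using lin_map_expand[OF lin V x y] x y lin by (simp add: index_mat_block)
      also have "\<dots> = (\<Sum>b<q. \<Sum>j<q. V $$ (b,j) *
          (\<Sum>k<m. \<Sum>l<m. H $$ (k,l) * (conjugate (A k $$ (y,j)) * A l $$ (x,b))))"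
        using blocks x y by (intro sum.cong refl) simp
      also have "\<dots> = (\<Sum>k<m. \<Sum>l<m. H $$ (k,l) * (A l * V * mat_adjoint (A k)) $$ (x,y))"
        by (rule hill_sum_expand[OF A V x y, symmetric])
      finally show "\<L> V $$ (x,y) = mat n n (\<lambda>(a,b).
        \<Sum>k<m. \<Sum>l<m. H $$ (k,l) * (A l * V * mat_adjoint (A k)) $$ (a,b)) $$ (x,y)"
        using x y by simp
    qed (use lin in \<open>auto simp: lin_map_def\<close>)
  qed
  show ?thesis unfolding hill_rep_def using hill_eq_iff by blast
qed

definition row_lincomb :: "nat \<Rightarrow> nat \<Rightarrow> nat \<Rightarrow> 'a::field mat \<Rightarrow> (nat \<Rightarrow> 'a mat) \<Rightarrow> nat \<Rightarrow> 'a mat" where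
  "row_lincomb n q m H A k = mat n q (\<lambda>(a,b). \<Sum>l<m. H $$ (k,l) * A l $$ (a,b))"

lemma row_lincomb_carrier[simp]: "row_lincomb n q m H A k \<in> carrier_mat n q"
  by (simp add: row_lincomb_def)

lemma index_row_lincomb[simp]:
  "a < n \<Longrightarrow> b < q \<Longrightarrow> row_lincomb n q m H A k $$ (a,b) = (\<Sum>l<m. H $$ (k,l) * A l $$ (a,b))"
  by (simp add: row_lincomb_def)

lemma hill_rep_blocks_row_lincomb:
  assumes "lin_map n q \<L>" "hill_rep n q \<L> m A H" "i < n" "j < q" "a < n" "b < q"
  shows "mat_block n q \<L> i j $$ (a,b) = (\<Sum>k<m. conjugate (A k $$ (i,j)) * row_lincomb n q m H A k $$ (a,b))"
  using assms by (simp add: hill_rep_iff_blocks sum_distrib_left ac_simps)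

lemma hill_rep_blocks_lincomb:
  assumes "lin_map n q \<L>" "hill_rep n q \<L> m A H" "i < n" "j < q" "a < n" "b < q"
  shows "mat_block n q \<L> i j $$ (a,b) = (\<Sum>l<m. (\<Sum>k<m. H $$ (k,l) * conjugate (A k $$ (i,j))) * A l $$ (a,b))"
proof -
  have "mat_block n q \<L> i j $$ (a,b) = (\<Sum>k<m. \<Sum>l<m. H $$ (k,l) * (conjugate (A k $$ (i,j)) * A l $$ (a,b)))"
    using assms by (simp add: hill_rep_iff_blocks)
  also have "\<dots> = (\<Sum>l<m. \<Sum>k<m. H $$ (k,l) * (conjugate (A k $$ (i,j)) * A l $$ (a,b)))"
    by (rule sum.swap)
  finally show ?thesis by (simp add: sum_distrib_left sum_distrib_right ac_simps)
qed

lemma blocks_subset_mspan: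
  fixes F :: "nat \<Rightarrow> 'a::field mat"
  assumes F: "\<forall>k<m. F k \<in> carrier_mat n q"
    and blocks: "\<And>i j a b. i < n \<Longrightarrow> j < q \<Longrightarrow> a < n \<Longrightarrow> b < q \<Longrightarrow>
      mat_block n q \<L> i j $$ (a,b) = (\<Sum>k<m. w i j k * F k $$ (a,b))"
  shows "blocks n q \<L> \<subseteq> mspan n q (F ` {..<m})"
proof
  fix X assume "X \<in> blocks n q \<L>"
  then obtain i j where "X = mat_block n q \<L> i j" "i < n" "j < q" by (auto simp: blocks_def)
  with F blocks show "X \<in> mspan n q (F ` {..<m})"
    by (subst mem_mspan_image_iff) (auto intro!: exI[of _ "w i j"])
qed

lemma mdim_blocks_le_hill_size:
  assumes lin: "lin_map n q \<L>" and hill: "hill_rep n q \<L> m A H"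
  shows "mdim n q (blocks n q \<L>) \<le> m"
proof -
  have sub: "blocks n q \<L> \<subseteq> mspan n q (row_lincomb n q m H A ` {..<m})"
    using hill_rep_blocks_row_lincomb[OF lin hill] by (intro blocks_subset_mspan) auto
  have "row_lincomb n q m H A ` {..<m} \<subseteq> carrier_mat n q"
    using row_lincomb_carrier by blast
  from mdim_le_card[OF finite_blocks blocks_carrier finite_lessThan this sub] show ?thesis by simp
qed

lemma minimal_hill_repI:
  assumes lin: "lin_map n q \<L>" and "m = mdim n q (blocks n q \<L>)" "hill_rep n q \<L> m A H"
  shows "minimal_hill_rep n q \<L> m A H"
  using assms mdim_blocks_le_hill_size[OF lin] by (auto simp: minimal_hill_rep_def)

text \<open>Write \<open>L\<^sub>i\<^sub>j = \<Sum>\<^sub>l c\<^sub>i\<^sub>j\<^sub>l A\<^sub>l\<close> in a basis \<open>A\<close> of the block span. The Hermitian symmetry of the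
  blocks makes every conjugated block a combination of the coefficient matrices
  \<open>C\<^sub>l = [c\<^sub>i\<^sub>j\<^sub>l]\<close>; since the conjugated blocks span a space of the same dimension \<open>m\<close> as
  the conjugated \<open>A\<^sub>k\<close>, the \<open>C\<^sub>l\<close> span that space too.\<close>
lemma coefficients_conjugate_expansion:
  assumes lin: "lin_map n q \<L>" and star: "star_linear q \<L>"
    and m: "m = mdim n q (blocks n q \<L>)"
    and A: "\<forall>k<m. A k \<in> carrier_mat n q" and span: "mspan n q (A ` {..<m}) = mspan n q (blocks n q \<L>)"
    and c: "\<forall>i<n. \<forall>j<q. \<forall>a<n. \<forall>b<q. mat_block n q \<L> i j $$ (a,b) = (\<Sum>l<m. c i j l * A l $$ (a,b))"
    and l: "l < m"
  shows "\<exists>h. \<forall>i<n. \<forall>j<q. c i j l = (\<Sum>k<m. h k * conjugate (A k $$ (i,j)))"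
proof -
  define C where "C l = mat n q (\<lambda>(i,j). c i j l)" for l
  define X where "X = (\<lambda>s. map_mat conjugate (mat_block n q \<L> (s mod n) (s div n)))"
  define cA where "cA = (\<lambda>k. map_mat conjugate (A k))"
  have Ac: "A ` {..<m} \<subseteq> carrier_mat n q" and cAc: "cA ` {..<m} \<subseteq> carrier_mat n q"
    using A by (auto simp: cA_def)
  have Xc: "X ` {..<q*n} \<subseteq> carrier_mat n q" by (auto simp: X_def)
  have "blocks n q \<L> \<subseteq> mspan n q (A ` {..<m})" using span subset_mspan[OF blocks_carrier] by simp
  then have "mat_lin_indep n q A {..<m}" using spanning_family_of_mdim[of _ n q A] A m by simp
  then have indep: "mat_lin_indep n q cA {..<m}" using mat_lin_indep_conjugate[OF _ Ac] by (simp add: cA_def)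
  have "mspan n q (X ` {..<q*n}) = mspan n q (cA ` {..<m})"
    unfolding X_def cA_def by (rule mspan_conjugate_eq) (use span Ac in \<open>auto simp: blocks_eq_image\<close>)
  moreover have "\<forall>k<m. cA k \<in> carrier_mat n q" using A by (simp add: cA_def)
  ultimately have "mdim n q (X ` {..<q*n}) = m"
    using mdim_image_lin_indep[OF _ indep] by (simp add: mdim_def)
  moreover have "X ` {..<q*n} \<subseteq> mspan n q (C ` {..<m})"
  proof
    fix Y assume "Y \<in> X ` {..<q*n}"
    then obtain s where s: "s < q*n" "Y = X s" by auto
    have s': "s mod n < n" "s div n < q" using mod_div_less_mult[of s n q] s by (auto simp: mult.commute)
    have "Y $$ (i,j) = (\<Sum>l<m. A l $$ (s mod n, s div n) * C l $$ (i,j))" if "i < n" "j < q" for i j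
      using that s s' c[rule_format, OF that s'] mat_block_conjugate[OF lin star that s']
      by (simp add: X_def C_def ac_simps)
    then show "Y \<in> mspan n q (C ` {..<m})" using s by (subst mem_mspan_image_iff) (auto simp: X_def C_def)
  qed
  ultimately have "mspan n q (C ` {..<m}) = mspan n q (cA ` {..<m})"
    using spanning_family_of_mdim[OF _ Xc, of C] \<open>mspan n q (X ` {..<q*n}) = _\<close>
    by (auto simp: C_def)
  moreover have "C ` {..<m} \<subseteq> carrier_mat n q" by (auto simp: C_def)
  then have "C l \<in> mspan n q (C ` {..<m})" using subset_mspan l by blast
  ultimately have "C l \<in> mspan n q (cA ` {..<m})" by simp
  then obtain h where h: "\<forall>i<n. \<forall>j<q. C l $$ (i,j) = (\<Sum>k<m. h k * cA k $$ (i,j))"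
    using mem_mspan_image_iff[OF finite_lessThan cAc] by blast
  have "c i j l = (\<Sum>k<m. h k * conjugate (A k $$ (i,j)))" if "i < n" "j < q" for i j
  proof -
    have "c i j l = (\<Sum>k<m. h k * cA k $$ (i,j))" using h that by (simp add: C_def)
    also have "\<dots> = (\<Sum>k<m. h k * conjugate (A k $$ (i,j)))"
      using A that by (intro sum.cong refl) (auto simp: cA_def)
    finally show ?thesis .
  qed
  then show ?thesis by blast
qed

lemma hill_rep_of_spanning_family:
  assumes lin: "lin_map n q \<L>" and star: "star_linear q \<L>"
    and m: "m = mdim n q (blocks n q \<L>)"
    and A: "\<forall>k<m. A k \<in> carrier_mat n q" and span: "mspan n q (A ` {..<m}) = mspan n q (blocks n q \<L>)"
  shows "\<exists>H. hill_rep n q \<L> m A H"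
proof -
  have Ac: "A ` {..<m} \<subseteq> carrier_mat n q" using A by auto
  have ex_c: "\<exists>c. \<forall>a<n. \<forall>b<q. mat_block n q \<L> i j $$ (a,b) = (\<Sum>l<m. c l * A l $$ (a,b))"
    if "i < n" "j < q" for i j
  proof -
    have "mat_block n q \<L> i j \<in> blocks n q \<L>" using that by (auto simp: blocks_def)
    then have "mat_block n q \<L> i j \<in> mspan n q (A ` {..<m})"
      using span subset_mspan[OF blocks_carrier, of n q \<L>] by blast
    then show ?thesis using mem_mspan_image_iff[OF _ Ac] by blast
  qed
  define c where
    "c i j = (SOME c. \<forall>a<n. \<forall>b<q. mat_block n q \<L> i j $$ (a,b) = (\<Sum>l<m. c l * A l $$ (a,b)))" for i j
  have c: "\<forall>i<n. \<forall>j<q. \<forall>a<n. \<forall>b<q. mat_block n q \<L> i j $$ (a,b) = (\<Sum>l<m. c i j l * A l $$ (a,b))"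
    using someI_ex[OF ex_c] unfolding c_def by blast
  define h where
    "h l = (SOME h. \<forall>i<n. \<forall>j<q. c i j l = (\<Sum>k<m. h k * conjugate (A k $$ (i,j))))" for l
  have h: "\<forall>l<m. \<forall>i<n. \<forall>j<q. c i j l = (\<Sum>k<m. h l k * conjugate (A k $$ (i,j)))"
    using someI_ex[OF coefficients_conjugate_expansion[OF lin star m A span c]] unfolding h_def by blast
  have "hill_rep n q \<L> m A (mat m m (\<lambda>(k,l). h l k))"
    unfolding hill_rep_iff_blocks[OF lin]
  proof (intro conjI allI impI)
    fix i j a b assume ij: "i < n" "j < q" "a < n" "b < q"
    have "mat_block n q \<L> i j $$ (a,b) = (\<Sum>l<m. \<Sum>k<m. h l k * (conjugate (A k $$ (i,j)) * A l $$ (a,b)))"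
      using c h ij by (simp add: sum_distrib_left ac_simps)
    also have "\<dots> = (\<Sum>k<m. \<Sum>l<m. h l k * (conjugate (A k $$ (i,j)) * A l $$ (a,b)))"
      by (rule sum.swap)
    also have "\<dots> = (\<Sum>k<m. \<Sum>l<m. mat m m (\<lambda>(k,l). h l k) $$ (k,l) * (conjugate (A k $$ (i,j)) * A l $$ (a,b)))"
      by simp
    finally show "mat_block n q \<L> i j $$ (a,b) =
      (\<Sum>k<m. \<Sum>l<m. mat m m (\<lambda>(k,l). h l k) $$ (k,l) * (conjugate (A k $$ (i,j)) * A l $$ (a,b)))" .
  qed (use A in auto)
  then show ?thesis by blast
qed

lemma constr_A_carrier[simp]: "constr_A n q \<alpha> k \<in> carrier_mat n q"
  by (simp add: constr_A_def)

lemma index_constr_A[simp]: "i < n \<Longrightarrow> j < q \<Longrightarrow> constr_A n q \<alpha> k $$ (i,j) = conjugate (\<alpha> i j k)"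
  by (simp add: constr_A_def)

lemma constr_H_carrier[simp]: "constr_H n q m Lf \<beta> \<in> carrier_mat m m"
  by (simp add: constr_H_def)

lemma index_constr_H:
  "k < m \<Longrightarrow> l < m \<Longrightarrow> constr_H n q m Lf \<beta> $$ (k,l) = (\<Sum>i<n. \<Sum>j<q. \<beta> k i j * conjugate (Lf l $$ (i,j)))"
  by (simp add: constr_H_def constr_B_def)

lemma constr_data_blocks:
  assumes "constr_data n q \<L> m Lf \<alpha> \<beta>" "i < n" "j < q" "a < n" "b < q"
  shows "mat_block n q \<L> i j $$ (a,b) = (\<Sum>k<m. \<alpha> i j k * Lf k $$ (a,b))"
  using assms(1)[unfolded constr_data_def, THEN conjunct2, THEN conjunct2, THEN conjunct1] assms(2-5)
  by blast

lemma constr_data_basis: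
  assumes "constr_data n q \<L> m Lf \<alpha> \<beta>" "k < m" "a < n" "b < q"
  shows "Lf k $$ (a,b) = (\<Sum>i<n. \<Sum>j<q. \<beta> k i j * mat_block n q \<L> i j $$ (a,b))"
  using assms(1)[unfolded constr_data_def, THEN conjunct2, THEN conjunct2, THEN conjunct2] assms(2-4)
  by blast

lemma constr_H_row_lincomb:
  assumes lin: "lin_map n q \<L>" and star: "star_linear q \<L>" and cd: "constr_data n q \<L> m Lf \<alpha> \<beta>"
    and "k < m" "a < n" "b < q"
  shows "Lf k $$ (a,b) = (\<Sum>l<m. constr_H n q m Lf \<beta> $$ (k,l) * conjugate (\<alpha> a b l))"
proof -
  have "(\<Sum>l<m. constr_H n q m Lf \<beta> $$ (k,l) * conjugate (\<alpha> a b l)) =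
      (\<Sum>l<m. \<Sum>i<n. \<Sum>j<q. \<beta> k i j * (conjugate (\<alpha> a b l) * conjugate (Lf l $$ (i,j))))"
    using assms by (simp add: index_constr_H sum_distrib_left sum_distrib_right ac_simps)
  also have "\<dots> = (\<Sum>i<n. \<Sum>j<q. \<Sum>l<m. \<beta> k i j * (conjugate (\<alpha> a b l) * conjugate (Lf l $$ (i,j))))"
    by (simp only: sum.swap[of _ "{..<m}"])
  also have "\<dots> = (\<Sum>i<n. \<Sum>j<q. \<beta> k i j * conjugate (\<Sum>l<m. \<alpha> a b l * Lf l $$ (i,j)))"
    by (simp add: sum_conjugate conjugate_dist_mul sum_distrib_left)
  also have "\<dots> = (\<Sum>i<n. \<Sum>j<q. \<beta> k i j * mat_block n q \<L> i j $$ (a,b))"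
  proof (intro sum.cong refl)
    fix i j assume ij: "i \<in> {..<n}" "j \<in> {..<q}"
    then have "conjugate (\<Sum>l<m. \<alpha> a b l * Lf l $$ (i,j)) = conjugate (mat_block n q \<L> a b $$ (i,j))"
      using constr_data_blocks[OF cd, of a b i j] assms by simp
    also have "\<dots> = mat_block n q \<L> i j $$ (a,b)"
      using mat_block_conjugate[OF lin star, of i j a b] ij assms by simp
    finally show "\<beta> k i j * conjugate (\<Sum>l<m. \<alpha> a b l * Lf l $$ (i,j)) =
        \<beta> k i j * mat_block n q \<L> i j $$ (a,b)" by simp
  qed
  also have "\<dots> = Lf k $$ (a,b)" using constr_data_basis[OF cd] assms by simp
  finally show ?thesis by simp
qed

lemma constr_hill_rep:
  assumes lin: "lin_map n q \<L>" and star: "star_linear q \<L>" and cd: "constr_data n q \<L> m Lf \<alpha> \<beta>"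
  shows "hill_rep n q \<L> m (constr_A n q \<alpha>) (constr_H n q m Lf \<beta>)"
  unfolding hill_rep_iff_blocks[OF lin]
proof (intro conjI allI impI)
  fix i j a b assume ij: "i < n" "j < q" "a < n" "b < q"
  have "mat_block n q \<L> i j $$ (a,b) = (\<Sum>k<m. \<alpha> i j k * Lf k $$ (a,b))"
    using constr_data_blocks[OF cd ij] .
  also have "\<dots> = (\<Sum>k<m. \<Sum>l<m. constr_H n q m Lf \<beta> $$ (k,l) *
      (conjugate (constr_A n q \<alpha> k $$ (i,j)) * constr_A n q \<alpha> l $$ (a,b)))"
    using ij constr_H_row_lincomb[OF lin star cd] by (simp add: sum_distrib_left ac_simps)
  finally show "mat_block n q \<L> i j $$ (a,b) = (\<Sum>k<m. \<Sum>l<m. constr_H n q m Lf \<beta> $$ (k,l) *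
      (conjugate (constr_A n q \<alpha> k $$ (i,j)) * constr_A n q \<alpha> l $$ (a,b)))" .
qed auto

lemma mem_mspan_blocksE:
  assumes "Y \<in> mspan n q (blocks n q \<L>)"
  obtains \<beta> where "\<forall>a<n. \<forall>b<q. Y $$ (a,b) = (\<Sum>i<n. \<Sum>j<q. \<beta> i j * mat_block n q \<L> i j $$ (a,b))"
proof -
  have carr: "(\<lambda>s. mat_block n q \<L> (s mod n) (s div n)) ` {..<q*n} \<subseteq> carrier_mat n q" by auto
  have "Y \<in> mspan n q ((\<lambda>s. mat_block n q \<L> (s mod n) (s div n)) ` {..<q*n})"
    using assms by (simp add: blocks_eq_image)
  then obtain c where c: "\<forall>a<n. \<forall>b<q. Y $$ (a,b) =
      (\<Sum>s\<in>{..<q*n}. c s * mat_block n q \<L> (s mod n) (s div n) $$ (a,b))"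
    unfolding mem_mspan_image_iff[OF finite_lessThan carr] by blast
  have "(\<Sum>s<q*n. c s * mat_block n q \<L> (s mod n) (s div n) $$ (a,b)) =
      (\<Sum>i<n. \<Sum>j<q. c (j*n + i) * mat_block n q \<L> i j $$ (a,b))" for a b
    by (simp add: sum_lessThan_mult sum.swap[of _ "{..<q}"])
  with c that[of "\<lambda>i j. c (j*n + i)"] show ?thesis by simp
qed

lemma minimal_hill_rep_size:
  assumes lin: "lin_map n q \<L>" and star: "star_linear q \<L>"
    and m: "m = mdim n q (blocks n q \<L>)" and min: "minimal_hill_rep n q \<L> m' A H"
  shows "m' = m"
proof -
  obtain g where "\<forall>k<m. g k \<in> carrier_mat n q" "mspan n q (g ` {..<m}) = mspan n q (blocks n q \<L>)"
    using exists_family_spanning[of "blocks n q \<L>" n q] m by auto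
  then obtain H' where "hill_rep n q \<L> m g H'" using hill_rep_of_spanning_family[OF lin star m] by blast
  then have "m' \<le> m" using min unfolding minimal_hill_rep_def by blast
  moreover have "m \<le> m'" using min mdim_blocks_le_hill_size[OF lin] m unfolding minimal_hill_rep_def by blast
  ultimately show ?thesis by simp
qed

lemma hill_rep_of_mdim_span:
  assumes lin: "lin_map n q \<L>" and m: "m = mdim n q (blocks n q \<L>)" and hill: "hill_rep n q \<L> m A H"
  shows "mspan n q (A ` {..<m}) = mspan n q (blocks n q \<L>)" "mat_lin_indep n q A {..<m}"
    and "mspan n q (row_lincomb n q m H A ` {..<m}) = mspan n q (blocks n q \<L>)"
      "mat_lin_indep n q (row_lincomb n q m H A) {..<m}"
proof -
  have A: "\<forall>k<m. A k \<in> carrier_mat n q" using hill by (simp add: hill_rep_def)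
  have "blocks n q \<L> \<subseteq> mspan n q (A ` {..<m})"
    using hill_rep_blocks_lincomb[OF lin hill] A by (intro blocks_subset_mspan) auto
  then show "mspan n q (A ` {..<m}) = mspan n q (blocks n q \<L>)" "mat_lin_indep n q A {..<m}"
    using spanning_family_of_mdim[OF finite_blocks blocks_carrier, of n q \<L> A] A m by auto
  have "blocks n q \<L> \<subseteq> mspan n q (row_lincomb n q m H A ` {..<m})"
    using hill_rep_blocks_row_lincomb[OF lin hill] by (intro blocks_subset_mspan) auto
  then show "mspan n q (row_lincomb n q m H A ` {..<m}) = mspan n q (blocks n q \<L>)"
      "mat_lin_indep n q (row_lincomb n q m H A) {..<m}"
    using spanning_family_of_mdim[OF finite_blocks blocks_carrier, of n q \<L> "row_lincomb n q m H A"] m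
    by auto
qed

text \<open>By the Hermitian symmetry of the blocks, the Hill identity and its conjugate give two
  expansions of each block in the independent family \<open>A\<close>; comparing coefficients twice
  (against \<open>A\<close>, then against the conjugated \<open>A\<close>) yields \<open>H\<^sup>* = H\<close>.\<close>
lemma hill_matrix_hermitian:
  assumes lin: "lin_map n q \<L>" and star: "star_linear q \<L>" and hill: "hill_rep n q \<L> m A H"
    and indep: "mat_lin_indep n q A {..<m}" and kl: "k < m" "l < m"
  shows "H $$ (k,l) = conjugate (H $$ (l,k))"
proof -
  have A: "A ` {..<m} \<subseteq> carrier_mat n q" using hill by (auto simp: hill_rep_def)
  define d where "d k l = H $$ (k,l) - conjugate (H $$ (l,k))" for k l
  have coeff: "(\<Sum>k<m. d k l * conjugate (A k $$ (i,j))) = 0" if "l < m" "i < n" "j < q" for l i j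
  proof -
    have "(\<Sum>l<m. (\<Sum>k<m. d k l * conjugate (A k $$ (i,j))) * A l $$ (a,b)) = 0"
      if ab: "a < n" "b < q" for a b
    proof -
      have "mat_block n q \<L> i j $$ (a,b) = conjugate (mat_block n q \<L> a b $$ (i,j))"
        using mat_block_conjugate[OF lin star ab \<open>i < n\<close> \<open>j < q\<close>] by simp
      also have "\<dots> = (\<Sum>l<m. (\<Sum>k<m. conjugate (H $$ (l,k)) * conjugate (A k $$ (i,j))) * A l $$ (a,b))"
        using hill ab \<open>i < n\<close> \<open>j < q\<close> lin
        by (simp add: hill_rep_iff_blocks sum_conjugate conjugate_dist_mul sum_distrib_right sum_distrib_left ac_simps)
      finally have "mat_block n q \<L> i j $$ (a,b) =
          (\<Sum>l<m. (\<Sum>k<m. conjugate (H $$ (l,k)) * conjugate (A k $$ (i,j))) * A l $$ (a,b))" .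
      moreover have "mat_block n q \<L> i j $$ (a,b) =
          (\<Sum>l<m. (\<Sum>k<m. H $$ (k,l) * conjugate (A k $$ (i,j))) * A l $$ (a,b))"
        using hill_rep_blocks_lincomb[OF lin hill] ab \<open>i < n\<close> \<open>j < q\<close> by simp
      ultimately show ?thesis by (simp add: d_def left_diff_distrib sum_subtractf)
    qed
    then show ?thesis
      using mat_lin_indepD[OF indep, where c="\<lambda>l'. \<Sum>k<m. d k l' * conjugate (A k $$ (i,j))"] that(1) by blast
  qed
  have cindep: "mat_lin_indep n q (\<lambda>k. map_mat conjugate (A k)) {..<m}"
    by (rule mat_lin_indep_conjugate[OF _ A indep]) simp
  have "(\<Sum>k<m. d k l * map_mat conjugate (A k) $$ (i,j)) = 0" if "i < n" "j < q" for i j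
  proof -
    have "(\<Sum>k<m. d k l * map_mat conjugate (A k) $$ (i,j)) = (\<Sum>k<m. d k l * conjugate (A k $$ (i,j)))"
      using A that by (intro sum.cong refl) auto
    with coeff[OF kl(2) that] show ?thesis by simp
  qed
  then have "d k l = 0" using mat_lin_indepD[OF cindep, where c="\<lambda>k'. d k' l"] kl(1) by blast
  then show ?thesis by (simp add: d_def)
qed

lemma mat_lin_indep_coefficients_biorthogonal:
  fixes G :: "nat \<Rightarrow> 'a::field mat" and F :: "nat \<Rightarrow> nat \<Rightarrow> 'a mat"
  assumes indep: "mat_lin_indep nr nc G {..<m}"
    and G: "\<And>k a b. k < m \<Longrightarrow> a < nr \<Longrightarrow> b < nc \<Longrightarrow>
      G k $$ (a,b) = (\<Sum>i<n. \<Sum>j<q. \<beta> k i j * F i j $$ (a,b))"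
    and F: "\<And>i j a b. i < n \<Longrightarrow> j < q \<Longrightarrow> a < nr \<Longrightarrow> b < nc \<Longrightarrow>
      F i j $$ (a,b) = (\<Sum>p<m. \<alpha> i j p * G p $$ (a,b))"
    and kp: "k < m" "p < m"
  shows "(\<Sum>i<n. \<Sum>j<q. \<beta> k i j * \<alpha> i j p) = (if k = p then 1 else 0)"
proof -
  define e where "e p = (\<Sum>i<n. \<Sum>j<q. \<beta> k i j * \<alpha> i j p) - (if k = p then 1 else 0)" for p
  have "(\<Sum>p<m. e p * G p $$ (a,b)) = 0" if ab: "a < nr" "b < nc" for a b
  proof -
    have "(\<Sum>p<m. (\<Sum>i<n. \<Sum>j<q. \<beta> k i j * \<alpha> i j p) * G p $$ (a,b)) =
        (\<Sum>p<m. \<Sum>i<n. \<Sum>j<q. \<beta> k i j * (\<alpha> i j p * G p $$ (a,b)))"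
      by (simp add: sum_distrib_right mult.assoc)
    also have "\<dots> = (\<Sum>i<n. \<Sum>j<q. \<Sum>p<m. \<beta> k i j * (\<alpha> i j p * G p $$ (a,b)))"
      by (simp only: sum.swap[of _ "{..<m}"])
    also have "\<dots> = (\<Sum>i<n. \<Sum>j<q. \<beta> k i j * F i j $$ (a,b))"
      using F ab by (simp add: sum_distrib_left)
    also have "\<dots> = G k $$ (a,b)" using G kp ab by simp
    finally have "(\<Sum>p<m. (\<Sum>i<n. \<Sum>j<q. \<beta> k i j * \<alpha> i j p) * G p $$ (a,b)) = G k $$ (a,b)" .
    moreover have "(\<Sum>p<m. (if k = p then 1 else 0) * G p $$ (a,b)) = G k $$ (a,b)"
    proof -
      have "(\<Sum>p<m. (if k = p then 1 else 0) * G p $$ (a,b)) = (\<Sum>p<m. if k = p then G p $$ (a,b) else 0)"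
        by (intro sum.cong) auto
      also have "\<dots> = G k $$ (a,b)" using kp by simp
      finally show ?thesis .
    qed
    ultimately show ?thesis by (simp add: e_def left_diff_distrib sum_subtractf)
  qed
  then have "e p = 0" using mat_lin_indepD[OF indep, where c=e] kp(2) by blast
  then show ?thesis by (simp add: e_def)
qed

lemma hermitian_eq_constr_H:
  fixes H :: "'a::conjugatable_field mat"
  assumes Hc: "H \<in> carrier_mat m m"
    and herm: "\<And>k l. k < m \<Longrightarrow> l < m \<Longrightarrow> H $$ (k,l) = conjugate (H $$ (l,k))"
    and biorth: "\<And>k p. k < m \<Longrightarrow> p < m \<Longrightarrow>
      (\<Sum>i<n. \<Sum>j<q. \<beta> k i j * conjugate (A p $$ (i,j))) = (if k = p then 1 else 0)"
  shows "H = constr_H n q m (row_lincomb n q m H A) \<beta>"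
proof (rule eq_matI)
  fix k l assume "k < dim_row (constr_H n q m (row_lincomb n q m H A) \<beta>)"
    "l < dim_col (constr_H n q m (row_lincomb n q m H A) \<beta>)"
  then have kl: "k < m" "l < m" by (simp_all add: constr_H_def)
  have "constr_H n q m (row_lincomb n q m H A) \<beta> $$ (k,l) =
      (\<Sum>i<n. \<Sum>j<q. \<Sum>p<m. conjugate (H $$ (l,p)) * (\<beta> k i j * conjugate (A p $$ (i,j))))"
    using kl by (simp add: index_constr_H sum_conjugate conjugate_dist_mul sum_distrib_left ac_simps)
  also have "\<dots> = (\<Sum>p<m. \<Sum>i<n. \<Sum>j<q. conjugate (H $$ (l,p)) * (\<beta> k i j * conjugate (A p $$ (i,j))))"
    by (simp only: sum.swap[of _ "{..<q}" "{..<m}"] sum.swap[of _ "{..<n}" "{..<m}"])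
  also have "\<dots> = (\<Sum>p<m. conjugate (H $$ (l,p)) * (\<Sum>i<n. \<Sum>j<q. \<beta> k i j * conjugate (A p $$ (i,j))))"
    by (simp add: sum_distrib_left)
  also have "\<dots> = (\<Sum>p<m. if k = p then conjugate (H $$ (l,p)) else 0)"
    using kl biorth by (intro sum.cong refl) auto
  also have "\<dots> = H $$ (k,l)" using kl by (simp add: herm[OF kl])
  finally show "H $$ (k,l) = constr_H n q m (row_lincomb n q m H A) \<beta> $$ (k,l)" by simp
qed (use Hc in \<open>simp_all add: constr_H_def\<close>)

lemma hill_rep_of_mdim_is_constr:
  assumes lin: "lin_map n q \<L>" and star: "star_linear q \<L>"
    and m: "m = mdim n q (blocks n q \<L>)" and hill: "hill_rep n q \<L> m A H"
  shows "\<exists>Lf \<alpha> \<beta>. constr_data n q \<L> m Lf \<alpha> \<beta> \<and> (\<forall>k<m. A k = constr_A n q \<alpha> k) \<and> H = constr_H n q m Lf \<beta>"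
proof -
  let ?G = "row_lincomb n q m H A"
  have A: "\<forall>k<m. A k \<in> carrier_mat n q" and Hc: "H \<in> carrier_mat m m" using hill by (auto simp: hill_rep_def)
  note spans = hill_rep_of_mdim_span[OF lin m hill]
  define \<alpha> where "\<alpha> i j k = conjugate (A k $$ (i,j))" for i j k
  have ex_\<beta>: "\<exists>\<beta>. \<forall>a<n. \<forall>b<q. ?G k $$ (a,b) = (\<Sum>i<n. \<Sum>j<q. \<beta> i j * mat_block n q \<L> i j $$ (a,b))"
    if "k < m" for k
  proof -
    have "?G ` {..<m} \<subseteq> carrier_mat n q" using row_lincomb_carrier by blast
    moreover have "?G k \<in> ?G ` {..<m}" using that by simp
    ultimately have "?G k \<in> mspan n q (blocks n q \<L>)" using subset_mspan spans(3) by blast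
    then obtain \<beta> where "\<forall>a<n. \<forall>b<q. ?G k $$ (a,b) = (\<Sum>i<n. \<Sum>j<q. \<beta> i j * mat_block n q \<L> i j $$ (a,b))"
      by (rule mem_mspan_blocksE)
    then show ?thesis by blast
  qed
  define \<beta> where "\<beta> k = (SOME \<beta>. \<forall>a<n. \<forall>b<q.
      ?G k $$ (a,b) = (\<Sum>i<n. \<Sum>j<q. \<beta> i j * mat_block n q \<L> i j $$ (a,b)))" for k
  have \<beta>: "\<And>k a b. k < m \<Longrightarrow> a < n \<Longrightarrow> b < q \<Longrightarrow>
      ?G k $$ (a,b) = (\<Sum>i<n. \<Sum>j<q. \<beta> k i j * mat_block n q \<L> i j $$ (a,b))"
    using someI_ex[OF ex_\<beta>] unfolding \<beta>_def by blast
  have blocks: "mat_block n q \<L> i j $$ (a,b) = (\<Sum>k<m. \<alpha> i j k * ?G k $$ (a,b))"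
    if "i < n" "j < q" "a < n" "b < q" for i j a b
    using hill_rep_blocks_row_lincomb[OF lin hill that] by (simp add: \<alpha>_def)
  have cd: "constr_data n q \<L> m ?G \<alpha> \<beta>"
    unfolding constr_data_def
  proof (intro conjI allI impI)
    fix i j a b assume "i < n" "j < q" "a < n" "b < q"
    then show "mat_block n q \<L> i j $$ (a,b) = (\<Sum>k<m. \<alpha> i j k * ?G k $$ (a,b))" by (rule blocks)
  next
    fix k a b assume "k < m" "a < n" "b < q"
    then show "?G k $$ (a,b) = (\<Sum>i<n. \<Sum>j<q. \<beta> k i j * mat_block n q \<L> i j $$ (a,b))" by (rule \<beta>)
  qed (use spans(3) in auto)
  have biorth: "(\<Sum>i<n. \<Sum>j<q. \<beta> k i j * \<alpha> i j p) = (if k = p then 1 else 0)" if "k < m" "p < m" for k p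
    using mat_lin_indep_coefficients_biorthogonal[OF spans(4) \<beta> blocks that] by simp
  have "H = constr_H n q m ?G \<beta>"
    by (rule hermitian_eq_constr_H[OF Hc hill_matrix_hermitian[OF lin star hill spans(2)]
          biorth[unfolded \<alpha>_def]])
  moreover have "\<forall>k<m. A k = constr_A n q \<alpha> k" using A by (auto simp: \<alpha>_def constr_A_def intro!: eq_matI)
  ultimately show ?thesis using cd by blast
qed

theorem theorem1p1:
  fixes \<L> :: "'a::conjugatable_field mat \<Rightarrow> 'a mat" and n q m :: nat
  assumes lin: "lin_map n q \<L>"
    and star: "star_linear q \<L>"
    and m_def: "m = vec_space.rank (q*n) (choi n q \<L>)"
  shows
    "(\<forall>Lf \<alpha> \<beta>. constr_data n q \<L> m Lf \<alpha> \<beta> \<longrightarrow>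
        minimal_hill_rep n q \<L> m (constr_A n q \<alpha>) (constr_H n q m Lf \<beta>))
   \<and> (\<forall>m' A H. minimal_hill_rep n q \<L> m' A H \<longrightarrow>
        (\<exists>Lf \<alpha> \<beta>. constr_data n q \<L> m Lf \<alpha> \<beta> \<and> m' = m \<and>
           (\<forall>k < m. A k = constr_A n q \<alpha> k) \<and> H = constr_H n q m Lf \<beta>))
   \<and> (\<forall>m' A H. minimal_hill_rep n q \<L> m' A H \<longrightarrow>
        mspan n q (A ` {..<m'}) = mspan n q (blocks n q \<L>))
   \<and> (\<forall>A. (\<forall>k < m. A k \<in> carrier_mat n q) \<and>
          mspan n q (A ` {..<m}) = mspan n q (blocks n q \<L>) \<longrightarrow>
        (\<exists>H. minimal_hill_rep n q \<L> m A H))"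
proof -
  have m: "m = mdim n q (blocks n q \<L>)" using m_def rank_choi[OF lin] by simp
  have size: "m' = m" and hill: "hill_rep n q \<L> m A H" if "minimal_hill_rep n q \<L> m' A H" for m' A H
    using minimal_hill_rep_size[OF lin star m that] that by (auto simp: minimal_hill_rep_def)
  show ?thesis
  proof (intro conjI allI impI)
    fix Lf \<alpha> \<beta> assume "constr_data n q \<L> m Lf \<alpha> \<beta>"
    then show "minimal_hill_rep n q \<L> m (constr_A n q \<alpha>) (constr_H n q m Lf \<beta>)"
      using minimal_hill_repI[OF lin m] constr_hill_rep[OF lin star] by blast
  next
    fix m' A H assume "minimal_hill_rep n q \<L> m' A H"
    then show "\<exists>Lf \<alpha> \<beta>. constr_data n q \<L> m Lf \<alpha> \<beta> \<and> m' = m \<and>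
        (\<forall>k < m. A k = constr_A n q \<alpha> k) \<and> H = constr_H n q m Lf \<beta>"
      using hill_rep_of_mdim_is_constr[OF lin star m hill] size by blast
  next
    fix m' A H assume "minimal_hill_rep n q \<L> m' A H"
    then show "mspan n q (A ` {..<m'}) = mspan n q (blocks n q \<L>)"
      using hill_rep_of_mdim_span(1)[OF lin m hill] size by blast
  next
    fix A assume "(\<forall>k < m. A k \<in> carrier_mat n q) \<and> mspan n q (A ` {..<m}) = mspan n q (blocks n q \<L>)"
    then show "\<exists>H. minimal_hill_rep n q \<L> m A H"
      using hill_rep_of_spanning_family[OF lin star m] minimal_hill_repI[OF lin m] by blast
  qed
qed

end
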